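(* Let $p>6$ and assume $h$ satisfies $(h_1)$. If $u\in H^{s,2}$ satisfies $u^+\neq0$ and $u^-\neq0$, then there exists a unique pair $(r_u,t_u)\in(0,\infty)\times(0,\infty)$ such that $r_uu^++t_uu^-\in\mathcal{M}_{s,2}$.
   Context: Let $d\ge 1$ and $s\in(0,1)$. $\mathbb{Z}^d$ is the integer lattice graph (vertices $\mathbb{Z}^d$, edges between $x,y$ with $\sum_i|x_i-y_i|=1$), with graph distance $|x-y|=\sum_{i=1}^d|x_i-y_i|$ and counting measure $\mu$; $\int_{\mathbb{Z}^d}f\,d\mu:=\sum_{x\in\mathbb{Z}^d}f(x)$. The weight $w_s(x,y)$, defined for $x\neq y$, is symmetric, positive, and satisfies $c_{s,d}|x-y|^{-d-2s}\le w_s(x,y)\le C_{s,d}|x-y|^{-d-2s}$ for some constants $0<c_{s,d}\le C_{s,d}$. For $u,v:\mathbb{Z}^d\to\mathbb{R}$ set $\nabla^s u\nabla^s v(x)=\frac12\sum_{y\neq x}w_s(x,y)(u(x)-u(y))(v(x)-v(y))$, $|\nabla^s u|^2(x)=\nabla^s u\nabla^s u(x)$, $\|\nabla^s u\|_2^2:=\int_{\mathbb{Z}^d}|\nabla^s u|^2d\mu$, and $(-\Delta)^s u(x)=\sum_{y\neq x}w_s(x,y)(u(x)-u(y))$; $\|u\|_q$ denotes the $\ell^q(\mathbb{Z}^d)$ norm. Fix constants $a,b>0$ and $p>2$. The potential $h:\mathbb{Z}^d\to\mathbb{R}$ may satisfy: $(h_1)$ there is $h_0>0$ with $h(x)\ge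 h_0$ for all $x$; $(h_2)$ there is $x_0\in\mathbb{Z}^d$ with $h(x)\to\infty$ as $|x-x_0|\to\infty$. $W^{s,2}(\mathbb{Z}^d)$ is the completion of finitely supported functions under $\|u\|_{W^{s,2}}^2=\int(|\nabla^s u|^2+u^2)d\mu$, and $H^{s,2}=\{u\in W^{s,2}:\int h u^2d\mu<\infty\}$ is the Hilbert space with inner product $\langle u,v\rangle_{H^{s,2}}=\int(a\nabla^s u\nabla^s v+huv)d\mu$ and norm $\|u\|_{H^{s,2}}$. Equation (E) is $\left(a+b\int_{\mathbb{Z}^d}|\nabla^s u|^2d\mu\right)(-\Delta)^s u+h(x)u=|u|^{p-2}u\log u^2$ on $\mathbb{Z}^d$ (with $|t|^{p-2}t\log t^2:=0$ at $t=0$). The energy is $J_{s,2}(u)=\frac12\|u\|_{H^{s,2}}^2+\frac b4\|\nabla^s u\|_2^4+\frac{2}{p^2}\int|u|^pd\mu-\frac1p\int|u|^p\log u^2d\mu$, a $C^1$ functional on $H^{s,2}$ with $\langle J_{s,2}'(u),\phi\rangle=\int(a\nabla^s u\nabla^s\phi+hu\phi)d\mu+b\|\nabla^s u\|_2^2\int\nabla^s u\nabla^s\phi\,d\mu-\int|u|^{p-2}u\phi\log u^2d\mu$. A weak solution is a critical point of $J_{s,2}$; nontrivial means $\neq0$. $u^+=\max\{u,0\}$, $u^-=\min\{u,0\}$. Nehari manifold: $\mathcal{N}_{s,2}=\{v\in H^{s,2}\setminus\{0\}:\langle J_{s,2}'(v),v\rangle=0\}$. Sign-changing Nehari set: $\mathcal{M}_{s,2}=\{v\in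 H^{s,2}: v^\pm\neq0,\ \langle J_{s,2}'(v),v^+\rangle=\langle J_{s,2}'(v),v^-\rangle=0\}$. A ground state solution is a nontrivial weak solution $u$ with $J_{s,2}(u)=\inf_{\mathcal{N}_{s,2}}J_{s,2}$; a sign-changing solution is a weak solution $u$ with $u^\pm\not\equiv0$; a ground state sign-changing solution is a sign-changing solution $u$ with $J_{s,2}(u)=\inf_{\mathcal{M}_{s,2}}J_{s,2}$. For $u\in H^{s,2}$, $K(u)=\sum_{x}\sum_{y\neq x}w_s(x,y)[u^+(y)u^-(x)+u^-(y)u^+(x)]$. *)

theory Defs
  imports "HOL-Analysis.Analysis"
begin

type_synonym 'd lat = "int ^ 'd"

definition ldist :: "'d::finite lat \<Rightarrow> 'd lat \<Rightarrow> real" where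
  "ldist x y = (\<Sum>i\<in>UNIV. real_of_int \<bar>x $ i - y $ i\<bar>)"

definition admissible_weight :: "real \<Rightarrow> ('d::finite lat \<Rightarrow> 'd lat \<Rightarrow> real) \<Rightarrow> bool" where
  "admissible_weight s w \<longleftrightarrow>
     (\<forall>x y. x \<noteq> y \<longrightarrow> w x y = w y x \<and> 0 < w x y) \<and>
     (\<exists>c C. 0 < c \<and> c \<le> C \<and>
        (\<forall>x y. x \<noteq> y \<longrightarrow>
            c * ldist x y powr (- (real CARD('d) + 2 * s)) \<le> w x y \<and>
            w x y \<le> C * ldist x y powr (- (real CARD('d) + 2 * s))))"

definition grad_sq :: "('d::finite lat \<Rightarrow> 'd lat \<Rightarrow> real) \<Rightarrow> ('d lat \<Rightarrow> real) \<Rightarrow> 'd lat \<Rightarrow> ennreal" where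
  "grad_sq w u x = (\<Sum>\<^sub>\<infinity>y\<in>UNIV - {x}. ennreal (w x y * (u x - u y)^2 / 2))"

definition W_norm_sq :: "('d::finite lat \<Rightarrow> 'd lat \<Rightarrow> real) \<Rightarrow> ('d lat \<Rightarrow> real) \<Rightarrow> ennreal" where
  "W_norm_sq w u = (\<Sum>\<^sub>\<infinity>x\<in>UNIV. grad_sq w u x + ennreal ((u x)^2))"

text \<open>W^{s,2}: completion of finitely supported functions, realised as the functions
  that are W-norm limits of finitely supported functions.\<close>
definition W_space :: "('d::finite lat \<Rightarrow> 'd lat \<Rightarrow> real) \<Rightarrow> ('d lat \<Rightarrow> real) set" where
  "W_space w = {u. \<exists>\<phi> :: nat \<Rightarrow> 'd lat \<Rightarrow> real.
      (\<forall>n. finite {x. \<phi> n x \<noteq> 0}) \<and>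
      ((\<lambda>n. W_norm_sq w (\<lambda>x. \<phi> n x - u x)) \<longlongrightarrow> 0) sequentially}"

definition H_space :: "('d::finite lat \<Rightarrow> 'd lat \<Rightarrow> real) \<Rightarrow> ('d lat \<Rightarrow> real) \<Rightarrow> ('d lat \<Rightarrow> real) set" where
  "H_space w h = {u \<in> W_space w. (\<Sum>\<^sub>\<infinity>x\<in>UNIV. ennreal (h x * (u x)^2)) < \<infinity>}"

definition grad_prod :: "('d::finite lat \<Rightarrow> 'd lat \<Rightarrow> real) \<Rightarrow> ('d lat \<Rightarrow> real) \<Rightarrow> ('d lat \<Rightarrow> real) \<Rightarrow> 'd lat \<Rightarrow> real" where
  "grad_prod w u v x = (1/2) * (\<Sum>\<^sub>\<infinity>y\<in>UNIV - {x}. w x y * (u x - u y) * (v x - v y))"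

definition grad_norm_sq :: "('d::finite lat \<Rightarrow> 'd lat \<Rightarrow> real) \<Rightarrow> ('d lat \<Rightarrow> real) \<Rightarrow> real" where
  "grad_norm_sq w u = (\<Sum>\<^sub>\<infinity>x\<in>UNIV. grad_prod w u u x)"

definition nonlin :: "real \<Rightarrow> real \<Rightarrow> real" where
  "nonlin p t = (if t = 0 then 0 else \<bar>t\<bar> powr (p - 2) * t * ln (t^2))"

definition Jderiv :: "real \<Rightarrow> real \<Rightarrow> real \<Rightarrow> ('d::finite lat \<Rightarrow> 'd lat \<Rightarrow> real) \<Rightarrow> ('d lat \<Rightarrow> real)
    \<Rightarrow> ('d lat \<Rightarrow> real) \<Rightarrow> ('d lat \<Rightarrow> real) \<Rightarrow> real" where
  "Jderiv a b p w h u \<phi> =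
     (\<Sum>\<^sub>\<infinity>x\<in>UNIV. a * grad_prod w u \<phi> x + h x * u x * \<phi> x)
     + b * grad_norm_sq w u * (\<Sum>\<^sub>\<infinity>x\<in>UNIV. grad_prod w u \<phi> x)
     - (\<Sum>\<^sub>\<infinity>x\<in>UNIV. nonlin p (u x) * \<phi> x)"

definition pos_part :: "('d lat \<Rightarrow> real) \<Rightarrow> 'd lat \<Rightarrow> real" where
  "pos_part u = (\<lambda>x. max (u x) 0)"

definition neg_part :: "('d lat \<Rightarrow> real) \<Rightarrow> 'd lat \<Rightarrow> real" where
  "neg_part u = (\<lambda>x. min (u x) 0)"

definition M_set :: "real \<Rightarrow> real \<Rightarrow> real \<Rightarrow> ('d::finite lat \<Rightarrow> 'd lat \<Rightarrow> real) \<Rightarrow> ('d lat \<Rightarrow> real)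
    \<Rightarrow> ('d lat \<Rightarrow> real) set" where
  "M_set a b p w h = {v \<in> H_space w h. pos_part v \<noteq> (\<lambda>_. 0) \<and> neg_part v \<noteq> (\<lambda>_. 0) \<and>
      Jderiv a b p w h v (pos_part v) = 0 \<and> Jderiv a b p w h v (neg_part v) = 0}"

end

theory Submission
  imports Defs
begin

text \<open>Write \<open>P = u\<^sup>+\<close> and \<open>Q = u\<^sup>-\<close>. Since \<open>P Q = 0\<close>, the two constraints
  \<open>\<langle>J'(r P + t Q), r P\<rangle> = 0\<close> and \<open>\<langle>J'(r P + t Q), t Q\<rangle> = 0\<close> are scalar equations in \<open>(r, t)\<close>
  whose coefficients are the energies of \<open>P\<close> and \<open>Q\<close>, their mixed energy (which is \<open>\<ge> 0\<close>),
  and the sums \<open>\<Sum>h P\<^sup>2\<close>, \<open>\<Sum>|P|\<^sup>p\<close>, \<open>\<Sum>|P|\<^sup>p log P\<^sup>2\<close> (and likewise for \<open>Q\<close>).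
  Dividing the first equation by \<open>r\<^sup>4\<close> it reads \<open>\<Lambda>(r, t/r) = r\<^sup>p\<^sup>-\<^sup>4 (S log r\<^sup>2 + L)\<close>, where
  \<open>\<Lambda>\<close> is decreasing in \<open>r\<close> and increasing in \<open>t/r\<close> while the right-hand side increases wherever
  it is positive; comparing two solutions along the ordering of \<open>t/r\<close> gives uniqueness.
  For existence, each equation is positive near the axis and negative far out, uniformly in the other
  variable, so a Poincar\'e--Miranda argument (Brouwer's theorem for a clamped map on a square)
  yields a common zero. The analytic work consists in justifying the rearrangements of the
  double sums, using that an admissible weight has uniformly summable rows.\<close>

section \<open>The scalar fibre system\<close>

lemma poincare_miranda_square:
  fixes f g :: "real \<Rightarrow> real \<Rightarrow> real"
  assumes "\<delta> \<le> R"
    and f_cont: "continuous_on (cbox (\<delta>, \<delta>) (R, R)) (\<lambda>z. f (fst z) (snd z))"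
    and g_cont: "continuous_on (cbox (\<delta>, \<delta>) (R, R)) (\<lambda>z. g (fst z) (snd z))"
    and f_left: "\<And>t. t \<in> {\<delta>..R} \<Longrightarrow> 0 \<le> f \<delta> t" and f_right: "\<And>t. t \<in> {\<delta>..R} \<Longrightarrow> f R t \<le> 0"
    and g_low: "\<And>r. r \<in> {\<delta>..R} \<Longrightarrow> 0 \<le> g r \<delta>" and g_high: "\<And>r. r \<in> {\<delta>..R} \<Longrightarrow> g r R \<le> 0"
  shows "\<exists>r\<in>{\<delta>..R}. \<exists>t\<in>{\<delta>..R}. f r t = 0 \<and> g r t = 0"
proof -
  define K where "K = cbox (\<delta>, \<delta>) (R, R)"
  define clamp where "clamp z = max \<delta> (min R z)" for z
  define T where "T z = (clamp (fst z + f (fst z) (snd z)), clamp (snd z + g (fst z) (snd z)))" for z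
  have K_iff: "z \<in> K \<longleftrightarrow> fst z \<in> {\<delta>..R} \<and> snd z \<in> {\<delta>..R}" for z
    by (cases z) (auto simp: K_def cbox_Pair_iff)
  have clamp_in: "clamp z \<in> {\<delta>..R}" for z
    using \<open>\<delta> \<le> R\<close> by (auto simp: clamp_def)
  have "continuous_on K T"
    unfolding T_def clamp_def K_def
    by (intro continuous_intros f_cont g_cont)
  moreover have "T \<in> K \<rightarrow> K"
    using clamp_in by (auto simp: K_iff T_def)
  moreover have "K \<noteq> {}"
    using K_iff[of "(\<delta>, \<delta>)"] \<open>\<delta> \<le> R\<close> by auto
  moreover have "compact K" "convex K"
    by (auto simp: K_def)
  ultimately obtain z where "z \<in> K" "T z = z"
    using brouwer[of K T] by blast
  then obtain r t where rt: "r \<in> {\<delta>..R}" "t \<in> {\<delta>..R}"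
    and fix_r: "clamp (r + f r t) = r" and fix_t: "clamp (t + g r t) = t"
    by (cases z) (auto simp: K_iff T_def)
  \<comment> \<open>A clamped coordinate can only be fixed with a nonzero increment at the wall it points to.\<close>
  have "f r t = 0"
  proof (rule ccontr)
    assume "f r t \<noteq> 0"
    then have "(0 < f r t \<and> r = R) \<or> (f r t < 0 \<and> r = \<delta>)"
      using fix_r rt by (auto simp: clamp_def max_def min_def split: if_splits)
    with f_left[OF rt(2)] f_right[OF rt(2)] show False by auto
  qed
  moreover have "g r t = 0"
  proof (rule ccontr)
    assume "g r t \<noteq> 0"
    then have "(0 < g r t \<and> t = R) \<or> (g r t < 0 \<and> t = \<delta>)"
      using fix_t rt by (auto simp: clamp_def max_def min_def split: if_splits)
    with g_low[OF rt(1)] g_high[OF rt(1)] show False by auto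
  qed
  ultimately show ?thesis using rt by blast
qed

text \<open>For \<open>v = r u\<^sup>+ + t u\<^sup>-\<close>, the value \<open>\<langle>J'(v), r u\<^sup>+\<rangle>\<close> equals
  \<open>fiber_deriv p a b X Y G H S L r t\<close> with \<open>X = \<parallel>\<nabla>u\<^sup>+\<parallel>\<^sup>2\<close>, \<open>Y = \<parallel>\<nabla>u\<^sup>-\<parallel>\<^sup>2\<close>,
  \<open>G = \<integral>\<nabla>u\<^sup>+\<nabla>u\<^sup>-\<close>, \<open>H = \<integral>h (u\<^sup>+)\<^sup>2\<close>, \<open>S = \<integral>|u\<^sup>+|\<^sup>p\<close> and \<open>L = \<integral>|u\<^sup>+|\<^sup>p log (u\<^sup>+)\<^sup>2\<close>;
  swapping the roles of the two parts gives \<open>\<langle>J'(v), t u\<^sup>-\<rangle>\<close>.\<close>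

definition fiber_deriv ::
    "real \<Rightarrow> real \<Rightarrow> real \<Rightarrow> real \<Rightarrow> real \<Rightarrow> real \<Rightarrow> real \<Rightarrow> real \<Rightarrow> real \<Rightarrow> real \<Rightarrow> real \<Rightarrow> real" where
  "fiber_deriv p a b X Y G H S L r t =
     a * (r\<^sup>2 * X + r * t * G) + r\<^sup>2 * H + b * (r\<^sup>2 * X + 2 * r * t * G + t\<^sup>2 * Y) * (r\<^sup>2 * X + r * t * G)
     - r powr p * (S * ln (r\<^sup>2) + L)"

definition fiber_quot :: "real \<Rightarrow> real \<Rightarrow> real \<Rightarrow> real \<Rightarrow> real \<Rightarrow> real \<Rightarrow> real \<Rightarrow> real \<Rightarrow> real" where
  "fiber_quot a b X Y G H r d = (a * (X + G * d) + H) / r\<^sup>2 + b * (X + 2 * G * d + Y * d\<^sup>2) * (X + G * d)"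

definition fiber_log :: "real \<Rightarrow> real \<Rightarrow> real \<Rightarrow> real \<Rightarrow> real" where
  "fiber_log p S L r = r powr (p - 4) * (S * ln (r\<^sup>2) + L)"

lemma fiber_deriv_eq_quot:
  assumes "r > 0"
  shows "fiber_deriv p a b X Y G H S L r t = r ^ 4 * (fiber_quot a b X Y G H r (t / r) - fiber_log p S L r)"
proof -
  have "r powr p = r ^ 4 * r powr (p - 4)"
    using assms by (simp add: powr_diff powr_realpow)
  then show ?thesis
    using assms unfolding fiber_deriv_def fiber_quot_def fiber_log_def
    by (simp add: field_simps power2_eq_square power4_eq_xxxx)
qed

context
  fixes a b X Y G H :: real
  assumes nonneg: "0 \<le> a" "0 \<le> b" "0 \<le> X" "0 \<le> Y" "0 \<le> G" and H_pos: "0 < H"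
begin

lemma fiber_quot_mono:
  assumes "0 \<le> d" "d \<le> d'" "r > 0"
  shows "fiber_quot a b X Y G H r d \<le> fiber_quot a b X Y G H r d'"
proof -
  have Gd: "G * d \<le> G * d'" and Yd: "Y * d\<^sup>2 \<le> Y * d'\<^sup>2"
    using assms nonneg by (simp_all add: mult_left_mono power_mono)
  then have "(a * (X + G * d) + H) / r\<^sup>2 \<le> (a * (X + G * d') + H) / r\<^sup>2"
    using assms nonneg by (simp add: divide_right_mono mult_left_mono)
  moreover have "(X + 2 * G * d + Y * d\<^sup>2) * (X + G * d) \<le> (X + 2 * G * d' + Y * d'\<^sup>2) * (X + G * d')"
    using Gd Yd assms nonneg by (intro mult_mono) auto
  then have "b * ((X + 2 * G * d + Y * d\<^sup>2) * (X + G * d)) \<le> b * ((X + 2 * G * d' + Y * d'\<^sup>2) * (X + G * d'))"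
    using nonneg by (simp add: mult_left_mono)
  ultimately show ?thesis
    unfolding fiber_quot_def by (simp add: mult.assoc)
qed

lemma fiber_quot_strict_antimono:
  assumes "0 \<le> d" "0 < r" "r < r'"
  shows "fiber_quot a b X Y G H r' d < fiber_quot a b X Y G H r d"
proof -
  have "0 < a * (X + G * d) + H"
    using assms nonneg H_pos by (simp add: add_nonneg_pos)
  moreover have "r\<^sup>2 < r'\<^sup>2"
    using assms by (simp add: power_strict_mono)
  ultimately have "(a * (X + G * d) + H) / r'\<^sup>2 < (a * (X + G * d) + H) / r\<^sup>2"
    using assms by (intro divide_strict_left_mono) auto
  then show ?thesis
    unfolding fiber_quot_def by simp
qed

lemma fiber_quot_pos:
  assumes "0 \<le> d" "0 < r"
  shows "0 < fiber_quot a b X Y G H r d"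
proof -
  have "0 < (a * (X + G * d) + H) / r\<^sup>2"
    using assms nonneg H_pos by (simp add: add_nonneg_pos)
  moreover have "0 \<le> b * (X + 2 * G * d + Y * d\<^sup>2) * (X + G * d)"
    using assms nonneg by simp
  ultimately show ?thesis
    unfolding fiber_quot_def by simp
qed

end

lemma fiber_log_strict_mono:
  assumes "0 < x" "x < y" "S > 0" "p > 4" "fiber_log p S L x > 0"
  shows "fiber_log p S L x < fiber_log p S L y"
proof -
  have px: "x powr (p - 4) > 0"
    using assms by simp
  then have Lx: "S * ln (x\<^sup>2) + L > 0"
    using assms unfolding fiber_log_def by (simp add: zero_less_mult_iff)
  have "ln (x\<^sup>2) < ln (y\<^sup>2)"
    using assms by (simp add: power_strict_mono)
  then have "S * ln (x\<^sup>2) + L < S * ln (y\<^sup>2) + L"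
    using assms by simp
  moreover have "x powr (p - 4) < y powr (p - 4)"
    using assms by (intro powr_less_mono2) auto
  ultimately show ?thesis
    unfolding fiber_log_def using px Lx by (intro mult_strict_mono) auto
qed

text \<open>Of two solutions of \<open>fiber_quot = fiber_log\<close>, the one with the larger ratio \<open>d\<close> has the
  larger \<open>r\<close>: otherwise \<open>fiber_quot\<close> would decrease while \<open>fiber_log\<close>, positive there, increases.\<close>

lemma fiber_root_le:
  assumes "0 < x1" "0 < x2" "0 \<le> d2" "d2 \<le> d1"
    and "0 \<le> X" "0 \<le> Y" "0 \<le> G" "0 < a" "0 < b" "0 < H" "S > 0" "p > 4"
    and root1: "fiber_quot a b X Y G H x1 d1 = fiber_log p S L x1"
    and root2: "fiber_quot a b X Y G H x2 d2 = fiber_log p S L x2"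
  shows "x2 \<le> x1"
proof (rule ccontr)
  assume "\<not> x2 \<le> x1"
  then have lt: "x1 < x2" by simp
  have "fiber_quot a b X Y G H x2 d2 \<le> fiber_quot a b X Y G H x2 d1"
    using assms by (intro fiber_quot_mono) auto
  also have "\<dots> < fiber_quot a b X Y G H x1 d1"
    using assms lt by (intro fiber_quot_strict_antimono) auto
  finally have "fiber_log p S L x2 < fiber_log p S L x1"
    using root1 root2 by simp
  moreover have "0 < fiber_log p S L x1"
    using root1 fiber_quot_pos[of a b X Y G H d1 x1] assms by simp
  then have "fiber_log p S L x1 < fiber_log p S L x2"
    using fiber_log_strict_mono assms lt by blast
  ultimately show False by simp
qed

lemma fiber_system_unique_ordered:
  assumes "0 \<le> X" "0 \<le> Y" "0 \<le> G" "0 < a" "0 < b" "0 < H1" "0 < H2" "S1 > 0" "S2 > 0" "p > 4"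
    and pos: "0 < r1" "0 < t1" "0 < r2" "0 < t2"
    and sol1: "fiber_deriv p a b X Y G H1 S1 L1 r1 t1 = 0" "fiber_deriv p a b Y X G H2 S2 L2 t1 r1 = 0"
    and sol2: "fiber_deriv p a b X Y G H1 S1 L1 r2 t2 = 0" "fiber_deriv p a b Y X G H2 S2 L2 t2 r2 = 0"
    and ord: "r2 * t1 \<le> r1 * t2"
  shows "r1 = r2 \<and> t1 = t2"
proof -
  have "t2 \<le> t1"
  proof (rule fiber_root_le)
    show "fiber_quot a b Y X G H2 t1 (r1 / t1) = fiber_log p S2 L2 t1"
      "fiber_quot a b Y X G H2 t2 (r2 / t2) = fiber_log p S2 L2 t2"
      using sol1 sol2 pos fiber_deriv_eq_quot[of t1] fiber_deriv_eq_quot[of t2] by simp_all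
    show "r2 / t2 \<le> r1 / t1"
      using ord pos by (simp add: divide_simps mult.commute)
  qed (use assms in auto)
  moreover have "r1 \<le> r2"
  proof (rule fiber_root_le)
    show "fiber_quot a b X Y G H1 r2 (t2 / r2) = fiber_log p S1 L1 r2"
      "fiber_quot a b X Y G H1 r1 (t1 / r1) = fiber_log p S1 L1 r1"
      using sol1 sol2 pos fiber_deriv_eq_quot[of r1] fiber_deriv_eq_quot[of r2] by simp_all
    show "t1 / r1 \<le> t2 / r2"
      using ord pos by (simp add: divide_simps mult.commute)
  qed (use assms in auto)
  ultimately have "r1 * t2 \<le> r2 * t2" "r2 * t2 \<le> r2 * t1"
    using pos by (simp_all add: mult_right_mono mult_left_mono)
  then have "r1 * t2 = r2 * t2" "r2 * t2 = r2 * t1"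
    using ord by linarith+
  then show ?thesis
    using pos by auto
qed

lemma fiber_deriv_pos_near_zero:
  assumes "0 \<le> X" "0 \<le> Y" "0 \<le> G" "0 < a" "0 < b" "0 < H" "S > 0" "p \<ge> 3"
  shows "\<exists>\<delta>>0. \<forall>r\<in>{0<..\<delta>}. \<forall>t>0. fiber_deriv p a b X Y G H S L r t > 0"
proof (intro exI conjI ballI allI impI)
  define \<delta> where "\<delta> = min 1 (H / (\<bar>L\<bar> + 1))"
  show "\<delta> > 0"
    using assms by (simp add: \<delta>_def)
  fix r t :: real
  assume r: "r \<in> {0<..\<delta>}" and t: "t > 0"
  have r1: "0 < r" "r \<le> 1"
    using r by (auto simp: \<delta>_def)
  have "r * \<bar>L\<bar> \<le> H / (\<bar>L\<bar> + 1) * \<bar>L\<bar>"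
    using r by (intro mult_right_mono) (auto simp: \<delta>_def)
  also have "\<dots> < H"
    using assms by (simp add: field_simps)
  finally have rL: "r * \<bar>L\<bar> < H" .
  have "ln (r\<^sup>2) \<le> 0"
    using r1 by (simp add: power_le_one)
  then have "S * ln (r\<^sup>2) + L \<le> \<bar>L\<bar>"
    using assms by (smt (verit) mult_nonneg_nonpos)
  then have "r powr p * (S * ln (r\<^sup>2) + L) \<le> r\<^sup>2 * r powr (p - 2) * \<bar>L\<bar>"
    using r1 by (simp add: mult_left_mono powr_diff powr_realpow)
  also have "\<dots> \<le> r\<^sup>2 * r * \<bar>L\<bar>"
    using r1 assms powr_mono'[of 1 "p - 2" r] by (intro mult_right_mono mult_left_mono) auto
  also have "\<dots> < r\<^sup>2 * H"
    using rL r1 by simp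
  finally have "r powr p * (S * ln (r\<^sup>2) + L) < r\<^sup>2 * H" .
  moreover have "0 \<le> a * (r\<^sup>2 * X + r * t * G) + b * (r\<^sup>2 * X + 2 * r * t * G + t\<^sup>2 * Y) * (r\<^sup>2 * X + r * t * G)"
    using assms r1 t by (intro add_nonneg_nonneg mult_nonneg_nonneg) auto
  ultimately show "fiber_deriv p a b X Y G H S L r t > 0"
    unfolding fiber_deriv_def by simp
qed

lemma fiber_deriv_neg_at:
  assumes "0 \<le> X" "0 \<le> Y" "0 \<le> G" "0 < a" "0 < b" "0 < H" "S > 0" "p \<ge> 5"
    and "1 \<le> R" "a * (X + G) + H + b * (X + 2 * G + Y) * (X + G) < R" "1 \<le> S * ln (R\<^sup>2) + L"
    and "0 < t" "t \<le> R"
  shows "fiber_deriv p a b X Y G H S L R t < 0"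
proof -
  have R24: "R\<^sup>2 \<le> R ^ 4"
    using assms by (simp add: power_increasing)
  have tG: "R * t * G \<le> R\<^sup>2 * G"
    using assms by (simp add: power2_eq_square mult_left_mono mult_right_mono)
  have tY: "t\<^sup>2 * Y \<le> R\<^sup>2 * Y"
    using assms by (simp add: power_mono mult_right_mono)
  have "a * (R\<^sup>2 * X + R * t * G) \<le> a * (R\<^sup>2 * (X + G))"
    using tG assms by (intro mult_left_mono) (auto simp: algebra_simps)
  also have "\<dots> \<le> a * (R ^ 4 * (X + G))"
    using R24 assms by (intro mult_left_mono mult_right_mono) auto
  finally have part1: "a * (R\<^sup>2 * X + R * t * G) \<le> R ^ 4 * (a * (X + G))"
    by (simp add: mult.left_commute)
  have part2: "R\<^sup>2 * H \<le> R ^ 4 * H"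
    using R24 assms by (simp add: mult_right_mono)
  have "(R\<^sup>2 * X + 2 * R * t * G + t\<^sup>2 * Y) * (R\<^sup>2 * X + R * t * G)
      \<le> (R\<^sup>2 * (X + 2 * G + Y)) * (R\<^sup>2 * (X + G))"
    using tG tY assms by (intro mult_mono) (auto simp: algebra_simps)
  also have "\<dots> = R ^ 4 * ((X + 2 * G + Y) * (X + G))"
    by (simp add: algebra_simps power4_eq_xxxx power2_eq_square)
  finally have part3: "b * (R\<^sup>2 * X + 2 * R * t * G + t\<^sup>2 * Y) * (R\<^sup>2 * X + R * t * G)
      \<le> R ^ 4 * (b * (X + 2 * G + Y) * (X + G))"
    using assms by (simp add: mult.assoc mult_left_mono mult.left_commute)
  have "a * (R\<^sup>2 * X + R * t * G) + R\<^sup>2 * H + b * (R\<^sup>2 * X + 2 * R * t * G + t\<^sup>2 * Y) * (R\<^sup>2 * X + R * t * G)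
      \<le> R ^ 4 * (a * (X + G) + H + b * (X + 2 * G + Y) * (X + G))"
    using part1 part2 part3 by (simp add: algebra_simps)
  also have "\<dots> < R ^ 4 * R"
    using assms by simp
  also have "\<dots> = R powr 5"
    using assms by (simp add: powr_realpow power_Suc2[symmetric] del: power_Suc)
  also have "\<dots> \<le> R powr p"
    using assms by (intro powr_mono) auto
  also have "\<dots> \<le> R powr p * (S * ln (R\<^sup>2) + L)"
    using assms by simp
  finally show ?thesis
    unfolding fiber_deriv_def by simp
qed

lemma fiber_deriv_neg_far:
  assumes "0 \<le> X" "0 \<le> Y" "0 \<le> G" "0 < a" "0 < b" "0 < H" "S > 0" "p \<ge> 5"
  shows "\<exists>R0. \<forall>R\<ge>R0. \<forall>t\<in>{0<..R}. fiber_deriv p a b X Y G H S L R t < 0"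
proof (intro exI allI impI ballI)
  define R0 where "R0 = max 1 (max (a * (X + G) + H + b * (X + 2 * G + Y) * (X + G) + 1)
                                   (exp ((\<bar>L\<bar> + 1) / (2 * S))))"
  fix R t :: real
  assume "R0 \<le> R" "t \<in> {0<..R}"
  moreover have "1 \<le> S * ln (R\<^sup>2) + L"
  proof -
    have "(\<bar>L\<bar> + 1) / (2 * S) \<le> ln R"
      using \<open>R0 \<le> R\<close> by (subst ln_ge_iff) (auto simp: R0_def)
    then have "\<bar>L\<bar> + 1 \<le> S * (2 * ln R)"
      using assms by (simp add: field_simps)
    moreover have "ln (R\<^sup>2) = 2 * ln R"
      using \<open>R0 \<le> R\<close> by (simp add: R0_def ln_realpow)
    ultimately show ?thesis
      using abs_ge_minus_self[of L] by (simp only:)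
  qed
  ultimately show "fiber_deriv p a b X Y G H S L R t < 0"
    using assms by (intro fiber_deriv_neg_at) (auto simp: R0_def)
qed

lemma continuous_on_fiber_deriv:
  assumes "\<And>z. z \<in> K \<Longrightarrow> 0 < f z"
    and "continuous_on K f" "continuous_on K g"
  shows "continuous_on K (\<lambda>z. fiber_deriv p a b X Y G H S L (f z) (g z))"
  unfolding fiber_deriv_def
  by (intro continuous_intros assms(2,3)) (use assms(1) in force)+

lemma fiber_system_exists:
  assumes "0 \<le> X" "0 \<le> Y" "0 \<le> G" "0 < a" "0 < b" "0 < H1" "0 < H2" "S1 > 0" "S2 > 0" "p \<ge> 5"
  shows "\<exists>r t. 0 < r \<and> 0 < t \<and>
           fiber_deriv p a b X Y G H1 S1 L1 r t = 0 \<and> fiber_deriv p a b Y X G H2 S2 L2 t r = 0"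
proof -
  have "p \<ge> 3" using assms by simp
  obtain \<delta>1 where "\<delta>1 > 0" and \<delta>1: "\<forall>r\<in>{0<..\<delta>1}. \<forall>t>0. fiber_deriv p a b X Y G H1 S1 L1 r t > 0"
    using fiber_deriv_pos_near_zero[OF assms(1-6,8) \<open>p \<ge> 3\<close>] by blast
  obtain \<delta>2 where "\<delta>2 > 0" and \<delta>2: "\<forall>t\<in>{0<..\<delta>2}. \<forall>r>0. fiber_deriv p a b Y X G H2 S2 L2 t r > 0"
    using fiber_deriv_pos_near_zero[OF assms(2,1,3-5,7,9) \<open>p \<ge> 3\<close>] by blast
  obtain R1 where R1: "\<forall>R\<ge>R1. \<forall>t\<in>{0<..R}. fiber_deriv p a b X Y G H1 S1 L1 R t < 0"
    using fiber_deriv_neg_far[OF assms(1-6,8,10)] by blast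
  obtain R2 where R2: "\<forall>R\<ge>R2. \<forall>r\<in>{0<..R}. fiber_deriv p a b Y X G H2 S2 L2 R r < 0"
    using fiber_deriv_neg_far[OF assms(2,1,3-5,7,9,10)] by blast
  define \<delta> where "\<delta> = min \<delta>1 \<delta>2"
  define R where "R = max \<delta> (max R1 R2)"
  have "0 < \<delta>" "\<delta> \<le> R" "\<delta> \<in> {0<..\<delta>1}" "\<delta> \<in> {0<..\<delta>2}" "R1 \<le> R" "R2 \<le> R"
    using \<open>\<delta>1 > 0\<close> \<open>\<delta>2 > 0\<close> by (auto simp: \<delta>_def R_def)
  have "\<exists>r\<in>{\<delta>..R}. \<exists>t\<in>{\<delta>..R}.
          fiber_deriv p a b X Y G H1 S1 L1 r t = 0 \<and> fiber_deriv p a b Y X G H2 S2 L2 t r = 0"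
  proof (rule poincare_miranda_square[OF \<open>\<delta> \<le> R\<close>])
    have pos: "0 < fst z \<and> 0 < snd z" if "z \<in> cbox (\<delta>, \<delta>) (R, R)" for z
      using that \<open>0 < \<delta>\<close> by (cases z) (auto simp: cbox_Pair_iff)
    then show "continuous_on (cbox (\<delta>, \<delta>) (R, R)) (\<lambda>z. fiber_deriv p a b X Y G H1 S1 L1 (fst z) (snd z))"
      "continuous_on (cbox (\<delta>, \<delta>) (R, R)) (\<lambda>z. fiber_deriv p a b Y X G H2 S2 L2 (snd z) (fst z))"
      by (simp_all add: continuous_on_fiber_deriv continuous_on_fst continuous_on_snd continuous_on_id)
    fix s assume "s \<in> {\<delta>..R}"
    then have s: "0 < s" "s \<in> {0<..R}"
      using \<open>0 < \<delta>\<close> by auto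
    show "0 \<le> fiber_deriv p a b X Y G H1 S1 L1 \<delta> s"
      using \<delta>1 \<open>\<delta> \<in> {0<..\<delta>1}\<close> s(1) by (simp add: less_imp_le)
    show "fiber_deriv p a b X Y G H1 S1 L1 R s \<le> 0"
      using R1 \<open>R1 \<le> R\<close> s(2) by (simp add: less_imp_le)
    show "0 \<le> fiber_deriv p a b Y X G H2 S2 L2 \<delta> s"
      using \<delta>2 \<open>\<delta> \<in> {0<..\<delta>2}\<close> s(1) by (simp add: less_imp_le)
    show "fiber_deriv p a b Y X G H2 S2 L2 R s \<le> 0"
      using R2 \<open>R2 \<le> R\<close> s(2) by (simp add: less_imp_le)
  qed
  then show ?thesis
    using \<open>0 < \<delta>\<close> by (meson atLeastAtMost_iff less_le_trans)
qed

lemma fiber_system_ex1: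
  assumes "0 \<le> X" "0 \<le> Y" "0 \<le> G" "0 < a" "0 < b" "0 < H1" "0 < H2" "S1 > 0" "S2 > 0" "p \<ge> 5"
  shows "\<exists>!(r, t). 0 < r \<and> 0 < t \<and>
           fiber_deriv p a b X Y G H1 S1 L1 r t = 0 \<and> fiber_deriv p a b Y X G H2 S2 L2 t r = 0"
proof -
  obtain r t where sol: "0 < r" "0 < t"
    "fiber_deriv p a b X Y G H1 S1 L1 r t = 0" "fiber_deriv p a b Y X G H2 S2 L2 t r = 0"
    using fiber_system_exists[OF assms] by blast
  have "p > 4"
    using assms by simp
  have uniq: "r' = r \<and> t' = t"
    if sol': "0 < r'" "0 < t'" "fiber_deriv p a b X Y G H1 S1 L1 r' t' = 0"
       "fiber_deriv p a b Y X G H2 S2 L2 t' r' = 0" for r' t'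
  proof (cases "r' * t \<le> r * t'")
    case True
    from fiber_system_unique_ordered[OF assms(1-9) \<open>p > 4\<close> sol(1,2) sol'(1,2) sol(3,4) sol'(3,4) True]
    show ?thesis by simp
  next
    case False
    then have "t' * r \<le> t * r'"
      by (simp add: mult.commute)
    from fiber_system_unique_ordered[OF assms(2,1,3-5,7,6,9,8) \<open>p > 4\<close> sol(2,1) sol'(2,1) sol(4,3) sol'(4,3) this]
    show ?thesis by simp
  qed
  show ?thesis
  proof (rule ex1I[of _ "(r, t)"])
    fix z
    assume z: "case z of (r', t') \<Rightarrow> 0 < r' \<and> 0 < t' \<and>
      fiber_deriv p a b X Y G H1 S1 L1 r' t' = 0 \<and> fiber_deriv p a b Y X G H2 S2 L2 t' r' = 0"
    obtain r' t' where "z = (r', t')"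
      by (cases z)
    with z uniq[of r' t'] show "z = (r, t)"
      by simp
  qed (use sol in simp)
qed

section \<open>Summation over symmetric kernels\<close>

lemma summable_on_abs_le:
  fixes f g :: "'a \<Rightarrow> real"
  assumes "g summable_on A" "\<And>x. x \<in> A \<Longrightarrow> \<bar>f x\<bar> \<le> g x"
  shows "f summable_on A"
proof -
  have "(\<lambda>x. norm (f x)) summable_on A"
    using assms by (intro Infinite_Sum.abs_summable_on_comparison_test'[OF assms(1)]) auto
  then show ?thesis
    by (rule abs_summable_summable)
qed

lemma infsum_ge_element:
  fixes f :: "'a \<Rightarrow> real"
  assumes "\<And>x. x \<in> A \<Longrightarrow> 0 \<le> f x" "f summable_on A" "y \<in> A"
  shows "f y \<le> infsum f A"
proof -
  have "infsum f {y} \<le> infsum f A"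
    by (rule infsum_mono_neutral) (use assms in auto)
  then show ?thesis by simp
qed

lemma summable_on_if_ennreal_infsum_finite:
  fixes f :: "'a \<Rightarrow> real"
  assumes nonneg: "\<And>x. x \<in> A \<Longrightarrow> 0 \<le> f x" and finite: "(\<Sum>\<^sub>\<infinity>x\<in>A. ennreal (f x)) \<noteq> \<infinity>"
  shows "f summable_on A"
proof (rule nonneg_bdd_above_summable_on)
  show "\<And>x. x \<in> A \<Longrightarrow> 0 \<le> f x" by fact
  obtain r where r: "(\<Sum>\<^sub>\<infinity>x\<in>A. ennreal (f x)) = ennreal r" "0 \<le> r"
    using finite by (cases "(\<Sum>\<^sub>\<infinity>x\<in>A. ennreal (f x))") auto
  show "bdd_above (sum f ` {F. F \<subseteq> A \<and> finite F})"
  proof (rule bdd_aboveI2)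
    fix F assume F: "F \<in> {F. F \<subseteq> A \<and> finite F}"
    then have "ennreal (sum f F) = (\<Sum>\<^sub>\<infinity>x\<in>F. ennreal (f x))"
      using nonneg by (subst sum_ennreal[symmetric]) auto
    also have "\<dots> \<le> (\<Sum>\<^sub>\<infinity>x\<in>A. ennreal (f x))"
      using F by (intro infsum_mono_neutral) (auto intro: nonneg_summable_on_complete)
    finally show "sum f F \<le> r"
      using r by (simp add: ennreal_le_iff)
  qed
qed

lemma infsum_ennreal:
  fixes f :: "'a \<Rightarrow> real"
  assumes nonneg: "\<And>x. x \<in> A \<Longrightarrow> 0 \<le> f x" and "f summable_on A"
  shows "(\<Sum>\<^sub>\<infinity>x\<in>A. ennreal (f x)) = ennreal (infsum f A)"
proof -
  have "(\<Sum>\<^sub>\<infinity>x\<in>A. ennreal (f x)) = (SUP F\<in>{F. finite F \<and> F \<subseteq> A}. (\<Sum>x\<in>F. ennreal (f x)))"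
    by (rule nonneg_infsum_complete) auto
  also have "\<dots> = (SUP F\<in>{F. finite F \<and> F \<subseteq> A}. ennreal (sum f F))"
    using nonneg by (intro SUP_cong refl) (auto intro!: sum_ennreal)
  also have "\<dots> = ennreal (infsum f A)"
    using infsum_nonneg_is_SUPREMUM_ennreal[OF assms(2) nonneg] by simp
  finally show ?thesis .
qed

text \<open>By symmetry the row bound \<open>W0\<close> is also a column bound; this is what makes the
  Schur-test estimates below work.\<close>

locale bounded_kernel =
  fixes w :: "'a \<Rightarrow> 'a \<Rightarrow> real" and W0 :: real
  assumes kernel_sym: "x \<noteq> y \<Longrightarrow> w x y = w y x"
    and kernel_pos: "x \<noteq> y \<Longrightarrow> 0 < w x y"
    and row_summable: "w x summable_on (UNIV - {x})"
    and row_bound: "infsum (w x) (UNIV - {x}) \<le> W0"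
begin

lemma kernel_nonneg: "x \<noteq> y \<Longrightarrow> 0 \<le> w x y"
  using kernel_pos by (simp add: less_imp_le)

lemma row_sum_nonneg: "0 \<le> infsum (w x) (UNIV - {x})"
  by (rule infsum_nonneg) (use kernel_nonneg in auto)

lemma bound_nonneg: "0 \<le> W0"
  using row_sum_nonneg row_bound order_trans by blast

lemma kernel_apply_summable:
  assumes f_summable: "f summable_on UNIV" and f_nonneg: "\<And>x. 0 \<le> f x"
  shows "(\<lambda>y. w x y * f y) summable_on (UNIV - {x})"
    and "(\<lambda>x. infsum (\<lambda>y. w x y * f y) (UNIV - {x})) summable_on UNIV"
    and "infsum (\<lambda>x. infsum (\<lambda>y. w x y * f y) (UNIV - {x})) UNIV \<le> W0 * infsum f UNIV"
proof -
  define D where "D = Sigma UNIV (\<lambda>x::'a. UNIV - {x})"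
  define W where "W x = infsum (w x) (UNIV - {x})" for x
  have f_le: "f y \<le> infsum f UNIV" for y
    by (rule infsum_ge_element[OF _ f_summable]) (auto simp: f_nonneg)
  show "(\<lambda>y. w x y * f y) summable_on (UNIV - {x})" for x
  proof (rule summable_on_abs_le)
    show "(\<lambda>y. infsum f UNIV * w x y) summable_on (UNIV - {x})"
      by (rule summable_on_cmult_right[OF row_summable])
    fix y assume "y \<in> UNIV - {x}"
    then show "\<bar>w x y * f y\<bar> \<le> infsum f UNIV * w x y"
    proof -
      have "f y * w x y \<le> infsum f UNIV * w x y"
        using f_le[of y] kernel_nonneg[of x y] \<open>y \<in> UNIV - {x}\<close> by (intro mult_right_mono) auto
      then show ?thesis
        using f_nonneg[of y] kernel_nonneg[of x y] \<open>y \<in> UNIV - {x}\<close> by (simp add: abs_mult mult.commute)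
    qed
  qed
  \<comment> \<open>Summing the rows of the transposed kernel first gives column sums, bounded by symmetry.\<close>
  have column: "((\<lambda>x. w x y * f y) has_sum (f y * W y)) (UNIV - {y})" for y
  proof -
    have "((\<lambda>x. f y * w y x) has_sum (f y * W y)) (UNIV - {y})"
      unfolding W_def by (intro has_sum_cmult_right has_sum_infsum row_summable)
    then show ?thesis
      by (rule has_sum_cong[THEN iffD1, rotated]) (simp add: kernel_sym)
  qed
  have columns_summable: "(\<lambda>y. f y * W y) summable_on UNIV"
  proof (rule summable_on_abs_le)
    show "(\<lambda>y. f y * W0) summable_on UNIV"
      by (rule summable_on_cmult_left[OF f_summable])
  qed (use row_sum_nonneg row_bound f_nonneg in \<open>auto simp: W_def mult_left_mono\<close>)
  have transposed: "(\<lambda>(y, x). w x y * f y) summable_on D"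
    unfolding D_def using column columns_summable kernel_nonneg f_nonneg
    by (intro summable_on_SigmaI[where g = "\<lambda>y. f y * W y"]) auto
  have swap_D: "prod.swap ` D = D"
    by (auto simp: D_def image_iff)
  have swap_fun: "(\<lambda>(x, y). w x y * f y) \<circ> prod.swap = (\<lambda>(y, x). w x y * f y)"
    by (auto simp: fun_eq_iff)
  have "(\<lambda>(x, y). w x y * f y) summable_on (prod.swap ` D)"
    using transposed swap_fun by (subst summable_on_reindex) auto
  then have swapped: "(\<lambda>(x, y). w x y * f y) summable_on D"
    using swap_D by simp
  show "(\<lambda>x. infsum (\<lambda>y. w x y * f y) (UNIV - {x})) summable_on UNIV"
    using summable_on_Sigma_banach[of "\<lambda>x y. w x y * f y" UNIV "\<lambda>x. UNIV - {x}"] swapped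
    unfolding D_def by simp
  have "infsum (\<lambda>x. infsum (\<lambda>y. w x y * f y) (UNIV - {x})) UNIV = infsum (\<lambda>(x, y). w x y * f y) D"
    using infsum_Sigma'_banach[of "\<lambda>x y. w x y * f y" UNIV "\<lambda>x. UNIV - {x}"] swapped
    unfolding D_def by simp
  also have "\<dots> = infsum (\<lambda>(x, y). w x y * f y) (prod.swap ` D)"
    using swap_D by simp
  also have "\<dots> = infsum (\<lambda>(y, x). w x y * f y) D"
    using swap_fun by (subst infsum_reindex) auto
  also have "\<dots> = infsum (\<lambda>y. infsum (\<lambda>x. w x y * f y) (UNIV - {y})) UNIV"
    using infsum_Sigma'_banach[of "\<lambda>y x. w x y * f y" UNIV "\<lambda>y. UNIV - {y}"] transposed
    unfolding D_def by simp
  also have "\<dots> = infsum (\<lambda>y. f y * W y) UNIV"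
    using column by (intro infsum_cong) (simp add: infsumI)
  also have "\<dots> \<le> infsum (\<lambda>y. f y * W0) UNIV"
    using columns_summable summable_on_cmult_left[OF f_summable] row_bound f_nonneg
    by (intro infsum_mono) (auto simp: W_def mult_left_mono)
  finally show "infsum (\<lambda>x. infsum (\<lambda>y. w x y * f y) (UNIV - {x})) UNIV \<le> W0 * infsum f UNIV"
    by (simp add: infsum_cmult_left' infsum_cmult_right' mult.commute)
qed

lemma dirichlet_summable:
  assumes g_summable: "(\<lambda>x. (g x)\<^sup>2) summable_on UNIV"
  shows "(\<lambda>y. w x y * (g x - g y)\<^sup>2) summable_on (UNIV - {x})"
    and "(\<lambda>x. infsum (\<lambda>y. w x y * (g x - g y)\<^sup>2) (UNIV - {x})) summable_on UNIV"
    and "infsum (\<lambda>x. infsum (\<lambda>y. w x y * (g x - g y)\<^sup>2) (UNIV - {x})) UNIV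
           \<le> 4 * W0 * infsum (\<lambda>x. (g x)\<^sup>2) UNIV"
proof -
  define S where "S = infsum (\<lambda>x. (g x)\<^sup>2) UNIV"
  define T where "T x = infsum (\<lambda>y. w x y * (g y)\<^sup>2) (UNIV - {x})" for x
  note K = kernel_apply_summable[of "\<lambda>x. (g x)\<^sup>2", OF g_summable zero_le_power2]
  have diag_summable: "(\<lambda>y. w x y * (g x)\<^sup>2) summable_on (UNIV - {x})" for x
    by (rule summable_on_cmult_left[OF row_summable])
  have split: "w x y * (g x - g y)\<^sup>2 \<le> 2 * (w x y * (g x)\<^sup>2) + 2 * (w x y * (g y)\<^sup>2)"
    if "y \<in> UNIV - {x}" for x y
  proof -
    have "2 * (g x)\<^sup>2 + 2 * (g y)\<^sup>2 - (g x - g y)\<^sup>2 = (g x + g y)\<^sup>2"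
      by (simp add: power2_eq_square algebra_simps)
    then have "(g x - g y)\<^sup>2 \<le> 2 * (g x)\<^sup>2 + 2 * (g y)\<^sup>2"
      using zero_le_power2[of "g x + g y"] by linarith
    then have "w x y * (g x - g y)\<^sup>2 \<le> w x y * (2 * (g x)\<^sup>2 + 2 * (g y)\<^sup>2)"
      using kernel_nonneg[of x y] that by (intro mult_left_mono) auto
    then show ?thesis
      by (simp add: algebra_simps)
  qed
  have split_summable: "(\<lambda>y. 2 * (w x y * (g x)\<^sup>2) + 2 * (w x y * (g y)\<^sup>2)) summable_on (UNIV - {x})" for x
    by (intro summable_on_add summable_on_cmult_right diag_summable K(1))
  show row: "(\<lambda>y. w x y * (g x - g y)\<^sup>2) summable_on (UNIV - {x})" for x
    by (rule summable_on_abs_le[OF split_summable]) (use split kernel_nonneg in auto)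
  have row_le: "infsum (\<lambda>y. w x y * (g x - g y)\<^sup>2) (UNIV - {x}) \<le> 2 * ((g x)\<^sup>2 * W0) + 2 * T x" for x
  proof -
    have "infsum (\<lambda>y. w x y * (g x - g y)\<^sup>2) (UNIV - {x})
        \<le> infsum (\<lambda>y. 2 * (w x y * (g x)\<^sup>2) + 2 * (w x y * (g y)\<^sup>2)) (UNIV - {x})"
      by (rule infsum_mono[OF row split_summable split]) simp
    also have "\<dots> = 2 * infsum (\<lambda>y. w x y * (g x)\<^sup>2) (UNIV - {x}) + 2 * T x"
      unfolding T_def
      by (subst infsum_add[OF summable_on_cmult_right[OF diag_summable] summable_on_cmult_right[OF K(1)]])
         (simp add: infsum_cmult_right')
    also have "infsum (\<lambda>y. w x y * (g x)\<^sup>2) (UNIV - {x}) = (g x)\<^sup>2 * infsum (w x) (UNIV - {x})"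
      by (simp add: infsum_cmult_left row_summable mult.commute)
    also have "\<dots> \<le> (g x)\<^sup>2 * W0"
      using row_bound by (simp add: mult_left_mono)
    finally show ?thesis by simp
  qed
  have bound_summable: "(\<lambda>x. 2 * ((g x)\<^sup>2 * W0) + 2 * T x) summable_on UNIV"
    unfolding T_def by (intro summable_on_add summable_on_cmult_right summable_on_cmult_left g_summable K(2))
  have row_nonneg: "0 \<le> infsum (\<lambda>y. w x y * (g x - g y)\<^sup>2) (UNIV - {x})" for x
    by (rule infsum_nonneg) (use kernel_nonneg in auto)
  show sum: "(\<lambda>x. infsum (\<lambda>y. w x y * (g x - g y)\<^sup>2) (UNIV - {x})) summable_on UNIV"
    by (rule summable_on_abs_le[OF bound_summable]) (use row_le row_nonneg in auto)
  have "infsum (\<lambda>x. infsum (\<lambda>y. w x y * (g x - g y)\<^sup>2) (UNIV - {x})) UNIV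
      \<le> infsum (\<lambda>x. 2 * ((g x)\<^sup>2 * W0) + 2 * T x) UNIV"
    by (rule infsum_mono[OF sum bound_summable row_le])
  also have "\<dots> = 2 * (W0 * S) + 2 * infsum T UNIV"
    unfolding T_def
    by (subst infsum_add[OF summable_on_cmult_right[OF summable_on_cmult_left[OF g_summable]]
          summable_on_cmult_right[OF K(2)]])
       (simp add: infsum_cmult_right' infsum_cmult_left' S_def mult.commute)
  also have "\<dots> \<le> 2 * (W0 * S) + 2 * (W0 * S)"
    using K(3) unfolding T_def S_def by simp
  finally show "infsum (\<lambda>x. infsum (\<lambda>y. w x y * (g x - g y)\<^sup>2) (UNIV - {x})) UNIV
      \<le> 4 * W0 * infsum (\<lambda>x. (g x)\<^sup>2) UNIV"
    by (simp add: S_def)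
qed

lemma increment_product_summable:
  assumes u_summable: "(\<lambda>x. (u x)\<^sup>2) summable_on UNIV"
    and f_dom: "\<And>x y. \<bar>f x - f y\<bar> \<le> \<bar>u x - u y\<bar>" and g_dom: "\<And>x y. \<bar>g x - g y\<bar> \<le> \<bar>u x - u y\<bar>"
  shows "(\<lambda>y. w x y * (f x - f y) * (g x - g y)) summable_on (UNIV - {x})"
    and "(\<lambda>x. infsum (\<lambda>y. w x y * (f x - f y) * (g x - g y)) (UNIV - {x})) summable_on UNIV"
proof -
  note D = dirichlet_summable[OF u_summable]
  have dom: "\<bar>w x y * (f x - f y) * (g x - g y)\<bar> \<le> w x y * (u x - u y)\<^sup>2" if "y \<in> UNIV - {x}" for x y
  proof -
    have "\<bar>(f x - f y) * (g x - g y)\<bar> \<le> \<bar>u x - u y\<bar> * \<bar>u x - u y\<bar>"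
      unfolding abs_mult by (intro mult_mono f_dom g_dom) auto
    then have "\<bar>(f x - f y) * (g x - g y)\<bar> \<le> (u x - u y)\<^sup>2"
      by (simp add: power2_eq_square abs_mult_self_eq)
    then show ?thesis
      using kernel_nonneg[of x y] that by (simp add: abs_mult mult.assoc mult_left_mono)
  qed
  show row: "(\<lambda>y. w x y * (f x - f y) * (g x - g y)) summable_on (UNIV - {x})" for x
    by (rule summable_on_abs_le[OF D(1) dom])
  show "(\<lambda>x. infsum (\<lambda>y. w x y * (f x - f y) * (g x - g y)) (UNIV - {x})) summable_on UNIV"
  proof (rule summable_on_abs_le[OF D(2)])
    fix x
    have abs_row: "(\<lambda>y. \<bar>w x y * (f x - f y) * (g x - g y)\<bar>) summable_on (UNIV - {x})"
      by (rule summable_on_abs_le[OF D(1)]) (use dom in auto)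
    have "\<bar>infsum (\<lambda>y. w x y * (f x - f y) * (g x - g y)) (UNIV - {x})\<bar>
        \<le> infsum (\<lambda>y. \<bar>w x y * (f x - f y) * (g x - g y)\<bar>) (UNIV - {x})"
      using norm_infsum_bound[of "\<lambda>y. w x y * (f x - f y) * (g x - g y)" "UNIV - {x}"] abs_row by simp
    also have "\<dots> \<le> infsum (\<lambda>y. w x y * (u x - u y)\<^sup>2) (UNIV - {x})"
      by (rule infsum_mono[OF abs_row D(1) dom])
    finally show "\<bar>infsum (\<lambda>y. w x y * (f x - f y) * (g x - g y)) (UNIV - {x})\<bar>
        \<le> infsum (\<lambda>y. w x y * (u x - u y)\<^sup>2) (UNIV - {x})" .
  qed
qed

end

lemma grad_prod_summable:
  assumes "bounded_kernel w W0" "(\<lambda>x. (u x)\<^sup>2) summable_on UNIV"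
    and "\<And>x y. \<bar>f x - f y\<bar> \<le> \<bar>u x - u y\<bar>" "\<And>x y. \<bar>g x - g y\<bar> \<le> \<bar>u x - u y\<bar>"
  shows "grad_prod w f g summable_on UNIV"
  unfolding grad_prod_def[abs_def]
  by (intro summable_on_cmult_right bounded_kernel.increment_product_summable[OF assms])

section \<open>Admissible weights and the space \<open>W\<^sup>s\<^sup>,\<^sup>2\<close>\<close>

lemma summable_on_int_powr:
  assumes "\<beta> > 1"
  shows "(\<lambda>k::int. (1 + real_of_int \<bar>k\<bar>) powr (-\<beta>)) summable_on UNIV"
proof -
  let ?g = "\<lambda>k::int. (1 + real_of_int \<bar>k\<bar>) powr (-\<beta>)"
  have "summable (\<lambda>n::nat. real n powr (-\<beta>))"
    using assms by (subst summable_real_powr_iff) auto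
  then have "summable (\<lambda>n::nat. real (Suc n) powr (-\<beta>))"
    using summable_Suc_iff[of "\<lambda>n. real n powr (-\<beta>)"] by simp
  then have nat_summable: "(\<lambda>n::nat. (1 + real n) powr (-\<beta>)) summable_on UNIV"
    by (subst summable_on_UNIV_nonneg_real_iff) (auto simp: add.commute)
  have "?g summable_on range int"
    by (subst summable_on_reindex) (auto simp: o_def inj_on_def nat_summable)
  moreover have "?g summable_on range (\<lambda>n::nat. - int n)"
    by (subst summable_on_reindex) (auto simp: o_def inj_on_def nat_summable)
  moreover have "range int \<union> range (\<lambda>n::nat. - int n) = UNIV"
  proof (intro set_eqI iffI)
    fix k :: int
    show "k \<in> range int \<union> range (\<lambda>n::nat. - int n)"
    proof (cases "k \<ge> 0")
      case True
      then show ?thesis by (auto intro!: image_eqI[of _ _ "nat k"])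
    next
      case False
      then show ?thesis by (auto intro!: image_eqI[of _ _ "nat (-k)"])
    qed
  qed auto
  ultimately show ?thesis
    using summable_on_union by metis
qed

lemma summable_on_prod_powr:
  assumes "\<beta> > 1"
  shows "(\<lambda>z::int^'d::finite. \<Prod>i\<in>UNIV. (1 + real_of_int \<bar>z$i\<bar>) powr (-\<beta>)) summable_on UNIV"
proof -
  let ?g = "\<lambda>k::int. (1 + real_of_int \<bar>k\<bar>) powr (-\<beta>)"
  let ?G = "\<lambda>f. \<Prod>i\<in>(UNIV::'d set). ?g (f i)"
  have "Infinite_Sum.abs_summable_on ?g UNIV"
    using summable_on_int_powr[OF assms] by simp
  then have "Infinite_Set_Sum.abs_summable_on ?g UNIV"
    by (rule abs_summable_equivalent[THEN iffD1])
  then have "Infinite_Set_Sum.abs_summable_on ?G (PiE UNIV (\<lambda>_. UNIV))"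
    by (intro abs_summable_on_prod_PiE) auto
  then have "Infinite_Set_Sum.abs_summable_on ?G UNIV"
    by simp
  then have "Infinite_Sum.abs_summable_on ?G UNIV"
    by (rule abs_summable_equivalent[THEN iffD2])
  then have "?G summable_on UNIV"
    by (rule abs_summable_summable)
  moreover have "bij_betw vec_nth (UNIV::(int^'d) set) (UNIV :: ('d \<Rightarrow> int) set)"
    by (intro bij_betwI[of _ _ _ vec_lambda]) (auto simp: vec_eq_iff)
  ultimately show ?thesis
    using summable_on_reindex_bij_betw[of vec_nth UNIV UNIV ?G] by simp
qed

lemma l1_norm_powr_le_prod:
  fixes z :: "int^'d::finite"
  assumes "z \<noteq> 0" "\<alpha> > 0"
  shows "(\<Sum>i\<in>UNIV. real_of_int \<bar>z$i\<bar>) powr (-\<alpha>)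
     \<le> 2 powr \<alpha> * (\<Prod>i\<in>UNIV. (1 + real_of_int \<bar>z$i\<bar>) powr (-(\<alpha> / real CARD('d))))"
proof -
  define n where "n = (\<Sum>i\<in>UNIV. real_of_int \<bar>z$i\<bar>)"
  define \<beta> where "\<beta> = \<alpha> / real CARD('d)"
  have coord_le: "real_of_int \<bar>z$i\<bar> \<le> n" for i
    unfolding n_def by (rule member_le_sum) auto
  obtain j where "z$j \<noteq> 0"
    using assms by (metis vec_eq_iff zero_index)
  then have n1: "1 \<le> n"
    using coord_le[of j] by linarith
  have "(2 * n) powr (-\<beta>) \<le> (1 + real_of_int \<bar>z$i\<bar>) powr (-\<beta>)" for i
    using coord_le[of i] n1 assms by (intro powr_mono2') (auto simp: \<beta>_def add_pos_nonneg)
  then have "(\<Prod>i\<in>(UNIV::'d set). (2 * n) powr (-\<beta>)) \<le> (\<Prod>i\<in>UNIV. (1 + real_of_int \<bar>z$i\<bar>) powr (-\<beta>))"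
    by (intro prod_mono) auto
  moreover have "(\<Prod>i\<in>(UNIV::'d set). (2 * n) powr (-\<beta>)) = (2 * n) powr (real CARD('d) * (-\<beta>))"
    using n1 by (simp add: powr_power)
  moreover have "real CARD('d) * (-\<beta>) = -\<alpha>"
    by (simp add: \<beta>_def)
  moreover have "n powr (-\<alpha>) = 2 powr \<alpha> * (2 * n) powr (-\<alpha>)"
    using n1 by (simp add: powr_mult powr_minus field_simps)
  ultimately show ?thesis
    unfolding n_def[symmetric] \<beta>_def[symmetric] by (simp add: mult_left_mono)
qed

lemma admissible_weight_bounded_kernel:
  fixes w :: "'d::finite lat \<Rightarrow> 'd lat \<Rightarrow> real"
  assumes "admissible_weight s w" "0 < s"
  shows "\<exists>W0. bounded_kernel w W0"
proof -
  define \<alpha> where "\<alpha> = real CARD('d) + 2 * s"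
  define \<beta> where "\<beta> = \<alpha> / real CARD('d)"
  define P where "P z = (\<Prod>i\<in>UNIV. (1 + real_of_int \<bar>z$i\<bar>) powr (-\<beta>))" for z :: "'d lat"
  obtain C where upper: "\<And>x y. x \<noteq> y \<Longrightarrow> w x y \<le> C * ldist x y powr (-\<alpha>)" and "0 < C"
    using assms(1) unfolding admissible_weight_def \<alpha>_def by (meson order_less_le_trans)
  have pos: "\<And>x y. x \<noteq> y \<Longrightarrow> 0 < w x y" and sym: "\<And>x y. x \<noteq> y \<Longrightarrow> w x y = w y x"
    using assms(1) unfolding admissible_weight_def by blast+
  have "0 < \<alpha>" "1 < \<beta>"
    using assms(2) by (simp_all add: \<alpha>_def \<beta>_def)
  have P_summable: "P summable_on UNIV"
    unfolding P_def by (rule summable_on_prod_powr[OF \<open>1 < \<beta>\<close>])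
  then have P_summable': "P summable_on (UNIV - {0})"
    by (rule summable_on_subset_banach) simp
  have P_nonneg: "0 \<le> P z" for z
    unfolding P_def by (intro prod_nonneg) auto
  \<comment> \<open>Translating row \<open>x\<close> to the origin, the weight is dominated by the summable product \<open>P\<close>.\<close>
  have shifted_le: "w x (x + z) \<le> C * 2 powr \<alpha> * P z" if "z \<in> UNIV - {0}" for x z
  proof -
    have "ldist x (x + z) = (\<Sum>i\<in>UNIV. real_of_int \<bar>z$i\<bar>)"
      unfolding ldist_def by simp
    then have "w x (x + z) \<le> C * (\<Sum>i\<in>UNIV. real_of_int \<bar>z$i\<bar>) powr (-\<alpha>)"
      using upper[of x "x + z"] that by simp
    also have "\<dots> \<le> C * (2 powr \<alpha> * P z)"
      using l1_norm_powr_le_prod[of z \<alpha>] that \<open>0 < \<alpha>\<close> \<open>0 < C\<close>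
      unfolding P_def \<beta>_def by (intro mult_left_mono) simp_all
    finally show ?thesis by simp
  qed
  have shift: "bij_betw (\<lambda>z. x + z) (UNIV - {0}) (UNIV - {x})" for x :: "'d lat"
    by (rule bij_betwI[of _ _ _ "\<lambda>y. y - x"]) auto
  have dominant_summable: "(\<lambda>z. C * 2 powr \<alpha> * P z) summable_on (UNIV - {0})"
    by (rule summable_on_cmult_right[OF P_summable'])
  have shifted_summable: "(\<lambda>z. w x (x + z)) summable_on (UNIV - {0})" for x
    by (rule summable_on_comparison_test[OF dominant_summable shifted_le])
       (use pos in \<open>auto simp: less_imp_le\<close>)
  have "bounded_kernel w (C * 2 powr \<alpha> * infsum P UNIV)"
  proof
    fix x y :: "'d lat"
    show "x \<noteq> y \<Longrightarrow> w x y = w y x" "x \<noteq> y \<Longrightarrow> 0 < w x y"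
      using sym pos by blast+
    show "w x summable_on (UNIV - {x})"
      using summable_on_reindex_bij_betw[OF shift, of "w x"] shifted_summable[of x] by simp
    have "infsum (\<lambda>z. w x (x + z)) (UNIV - {0}) \<le> infsum (\<lambda>z. C * 2 powr \<alpha> * P z) (UNIV - {0})"
      by (rule infsum_mono[OF shifted_summable dominant_summable shifted_le])
    also have "\<dots> = C * 2 powr \<alpha> * infsum P (UNIV - {0})"
      by (rule infsum_cmult_right')
    also have "\<dots> \<le> C * 2 powr \<alpha> * infsum P UNIV"
      using P_summable' P_summable P_nonneg \<open>0 < C\<close>
      by (intro mult_left_mono infsum_mono_neutral) auto
    finally show "infsum (w x) (UNIV - {x}) \<le> C * 2 powr \<alpha> * infsum P UNIV"
      using infsum_reindex_bij_betw[OF shift, of "w x"] by simp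
  qed
  then show ?thesis ..
qed

lemma W_norm_sq_le:
  fixes w :: "'d::finite lat \<Rightarrow> 'd lat \<Rightarrow> real"
  assumes "bounded_kernel w W0" and g_summable: "(\<lambda>x. (g x)\<^sup>2) summable_on UNIV"
  shows "W_norm_sq w g \<le> ennreal ((4 * W0 + 1) * infsum (\<lambda>x. (g x)\<^sup>2) UNIV)"
proof -
  interpret bounded_kernel w W0 by fact
  define E where "E x = infsum (\<lambda>y. w x y * (g x - g y)\<^sup>2) (UNIV - {x}) / 2" for x
  note D = dirichlet_summable[OF g_summable]
  have E_nonneg: "0 \<le> E x" for x
    unfolding E_def by (intro divide_nonneg_pos infsum_nonneg) (auto simp: kernel_nonneg)
  have E_has_sum: "(E has_sum (infsum (\<lambda>x. infsum (\<lambda>y. w x y * (g x - g y)\<^sup>2) (UNIV - {x})) UNIV / 2)) UNIV"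
    unfolding E_def[abs_def] by (intro has_sum_divide_const has_sum_infsum D(2))
  then have E_summable: "E summable_on UNIV"
    by (rule has_sum_imp_summable)
  have "grad_sq w g x = ennreal (E x)" for x
  proof -
    have row: "((\<lambda>y. w x y * (g x - g y)\<^sup>2 / 2) has_sum E x) (UNIV - {x})"
      unfolding E_def by (intro has_sum_divide_const has_sum_infsum D(1))
    have "grad_sq w g x = ennreal (infsum (\<lambda>y. w x y * (g x - g y)\<^sup>2 / 2) (UNIV - {x}))"
      unfolding grad_sq_def
      by (rule infsum_ennreal) (use kernel_nonneg has_sum_imp_summable[OF row] in auto)
    then show ?thesis
      using row by (simp add: infsumI)
  qed
  then have "W_norm_sq w g = (\<Sum>\<^sub>\<infinity>x\<in>UNIV. ennreal (E x + (g x)\<^sup>2))"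
    unfolding W_norm_sq_def using E_nonneg by (simp add: ennreal_plus)
  also have "\<dots> = ennreal (infsum (\<lambda>x. E x + (g x)\<^sup>2) UNIV)"
    using E_nonneg by (intro infsum_ennreal summable_on_add E_summable g_summable) (simp add: add_nonneg_nonneg)
  also have "\<dots> = ennreal (infsum E UNIV + infsum (\<lambda>x. (g x)\<^sup>2) UNIV)"
    by (simp add: infsum_add E_summable g_summable)
  also have "\<dots> \<le> ennreal ((4 * W0 + 1) * infsum (\<lambda>x. (g x)\<^sup>2) UNIV)"
  proof (rule ennreal_leI)
    have "infsum E UNIV \<le> 2 * W0 * infsum (\<lambda>x. (g x)\<^sup>2) UNIV"
      using D(3) infsumI[OF E_has_sum] by simp
    moreover have "0 \<le> W0 * infsum (\<lambda>x. (g x)\<^sup>2) UNIV"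
      using bound_nonneg by (simp add: infsum_nonneg)
    ultimately show "infsum E UNIV + infsum (\<lambda>x. (g x)\<^sup>2) UNIV \<le> (4 * W0 + 1) * infsum (\<lambda>x. (g x)\<^sup>2) UNIV"
      by (simp add: algebra_simps)
  qed
  finally show ?thesis .
qed

definition lattice_box :: "nat \<Rightarrow> 'd::finite lat set" where
  "lattice_box n = {x. \<forall>i. \<bar>x$i\<bar> \<le> int n}"

lemma finite_lattice_box: "finite (lattice_box n :: 'd::finite lat set)"
proof -
  have "(lattice_box n :: 'd lat set) \<subseteq> vec_lambda ` (Pi\<^sub>E UNIV (\<lambda>_. {-int n..int n}))"
  proof
    fix x :: "'d lat"
    assume "x \<in> lattice_box n"
    then have bound: "\<bar>x$i\<bar> \<le> int n" for i
      by (simp add: lattice_box_def)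
    have "x$i \<in> {-int n..int n}" for i
      using bound[of i] by (auto simp: abs_le_iff)
    then have "vec_nth x \<in> Pi\<^sub>E UNIV (\<lambda>_. {-int n..int n})"
      by (simp add: PiE_UNIV_domain)
    then show "x \<in> vec_lambda ` (Pi\<^sub>E UNIV (\<lambda>_. {-int n..int n}))"
      by (metis image_eqI vec_nth_inverse)
  qed
  then show ?thesis
    by (rule finite_subset) (auto intro!: finite_imageI finite_PiE)
qed

lemma lattice_box_exhausts: "filterlim lattice_box (finite_subsets_at_top (UNIV :: 'd::finite lat set)) sequentially"
  unfolding filterlim_finite_subsets_at_top
proof (intro allI impI)
  fix X :: "'d lat set"
  assume "finite X \<and> X \<subseteq> UNIV"
  define N where "N = (\<Sum>x\<in>X. nat (\<Sum>i\<in>UNIV. \<bar>x$i\<bar>))"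
  have "X \<subseteq> lattice_box n" if "N \<le> n" for n
  proof
    fix x assume "x \<in> X"
    have "\<bar>x$i\<bar> \<le> int n" for i
    proof -
      have "\<bar>x$i\<bar> \<le> (\<Sum>i\<in>UNIV. \<bar>x$i\<bar>)"
        by (rule member_le_sum) auto
      also have "\<dots> = int (nat (\<Sum>i\<in>UNIV. \<bar>x$i\<bar>))"
        by (simp add: sum_nonneg)
      also have "\<dots> \<le> int N"
        unfolding N_def of_nat_le_iff using \<open>finite X \<and> X \<subseteq> UNIV\<close> \<open>x \<in> X\<close>
        by (intro member_le_sum) auto
      finally show ?thesis
        using that by linarith
    qed
    then show "x \<in> lattice_box n"
      by (simp add: lattice_box_def)
  qed
  then show "\<forall>\<^sub>F n in sequentially. finite (lattice_box n) \<and> X \<subseteq> lattice_box n \<and> lattice_box n \<subseteq> UNIV"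
    using finite_lattice_box unfolding eventually_sequentially by blast
qed

text \<open>Truncations to the boxes approximate a square-summable function in the \<open>W\<^sup>s\<^sup>,\<^sup>2\<close> norm,
  because that norm is controlled by the \<open>\<ell>\<^sup>2\<close> norm (\<open>W_norm_sq_le\<close>).\<close>

lemma W_space_if_square_summable:
  fixes w :: "'d::finite lat \<Rightarrow> 'd lat \<Rightarrow> real"
  assumes "bounded_kernel w W0" and g_summable: "(\<lambda>x. (g x)\<^sup>2) summable_on UNIV"
  shows "g \<in> W_space w"
proof -
  define S where "S = infsum (\<lambda>x. (g x)\<^sup>2) UNIV"
  define \<phi> where "\<phi> n x = (if x \<in> lattice_box n then g x else 0)" for n x
  have tail_sq: "(\<phi> n x - g x)\<^sup>2 = (if x \<in> lattice_box n then 0 else (g x)\<^sup>2)" for n x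
    by (simp add: \<phi>_def)
  have tail_summable: "(\<lambda>x. (\<phi> n x - g x)\<^sup>2) summable_on UNIV" for n
    by (rule summable_on_abs_le[OF g_summable]) (simp add: tail_sq)
  have tail_sum: "infsum (\<lambda>x. (\<phi> n x - g x)\<^sup>2) UNIV = S - sum (\<lambda>x. (g x)\<^sup>2) (lattice_box n)" for n
  proof -
    have "infsum (\<lambda>x. (\<phi> n x - g x)\<^sup>2) UNIV = infsum (\<lambda>x. (g x)\<^sup>2) (UNIV - lattice_box n)"
      by (rule infsum_cong_neutral) (auto simp: tail_sq)
    also have "\<dots> = S - infsum (\<lambda>x. (g x)\<^sup>2) (lattice_box n)"
      unfolding S_def by (rule infsum_Diff[OF g_summable]) (auto intro: summable_on_finite finite_lattice_box)
    finally show ?thesis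
      by (simp add: finite_lattice_box)
  qed
  have "(\<lambda>n. sum (\<lambda>x. (g x)\<^sup>2) (lattice_box n)) \<longlonglongrightarrow> S"
    unfolding S_def by (rule filterlim_compose[OF infsum_tendsto[OF g_summable] lattice_box_exhausts])
  then have "(\<lambda>n. (4 * W0 + 1) * (S - sum (\<lambda>x. (g x)\<^sup>2) (lattice_box n))) \<longlonglongrightarrow> (4 * W0 + 1) * (S - S)"
    by (intro tendsto_intros)
  then have bound_tendsto: "(\<lambda>n. ennreal ((4 * W0 + 1) * infsum (\<lambda>x. (\<phi> n x - g x)\<^sup>2) UNIV)) \<longlonglongrightarrow> 0"
    unfolding tail_sum using tendsto_ennrealI by fastforce
  have "(\<lambda>n. W_norm_sq w (\<lambda>x. \<phi> n x - g x)) \<longlonglongrightarrow> 0"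
  proof (rule tendsto_sandwich[OF _ _ tendsto_const bound_tendsto])
    show "\<forall>\<^sub>F n in sequentially. 0 \<le> W_norm_sq w (\<lambda>x. \<phi> n x - g x)"
      by simp
    show "\<forall>\<^sub>F n in sequentially.
        W_norm_sq w (\<lambda>x. \<phi> n x - g x) \<le> ennreal ((4 * W0 + 1) * infsum (\<lambda>x. (\<phi> n x - g x)\<^sup>2) UNIV)"
      using W_norm_sq_le[OF assms(1) tail_summable] by simp
  qed
  moreover have "finite {x. \<phi> n x \<noteq> 0}" for n
    by (rule finite_subset[OF _ finite_lattice_box[of n]]) (auto simp: \<phi>_def)
  ultimately show ?thesis
    unfolding W_space_def by blast
qed

section \<open>The logarithmic nonlinearity\<close>

lemma abs_powr_two: "\<bar>x :: real\<bar> powr 2 = x\<^sup>2"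
  by (cases "x = 0") (simp_all add: powr_realpow[of "\<bar>x\<bar>" 2, simplified])

lemma abs_powr_split:
  assumes "p > 2"
  shows "\<bar>x :: real\<bar> powr p = x\<^sup>2 * \<bar>x\<bar> powr (p - 2)"
  using assms by (cases "x = 0") (simp_all add: abs_powr_two powr_add[of "\<bar>x\<bar>" 2 "p - 2", simplified])

lemma nonlin_mult_scale:
  fixes c y :: real
  assumes "c > 0"
  shows "nonlin p (c * y) * (c * y) = c powr p * (\<bar>y\<bar> powr p * ln (c\<^sup>2)) + c powr p * (\<bar>y\<bar> powr p * ln (y\<^sup>2))"
proof (cases "y = 0")
  case True
  then show ?thesis by (simp add: nonlin_def)
next
  case False
  then have "nonlin p (c * y) * (c * y) = \<bar>c * y\<bar> powr (p - 2) * \<bar>c * y\<bar> powr 2 * ln ((c * y)\<^sup>2)"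
    using assms by (simp add: nonlin_def abs_powr_two power2_eq_square)
  also have "\<bar>c * y\<bar> powr (p - 2) * \<bar>c * y\<bar> powr 2 = \<bar>c * y\<bar> powr p"
    by (simp only: powr_add[symmetric] diff_add_cancel)
  also have "\<dots> = c powr p * \<bar>y\<bar> powr p"
    using assms by (simp add: abs_mult powr_mult)
  also have "ln ((c * y)\<^sup>2) = ln (c\<^sup>2) + ln (y\<^sup>2)"
    using assms False by (simp add: power_mult_distrib ln_mult)
  finally show ?thesis
    by (simp add: algebra_simps)
qed

lemma powr_mult_abs_ln_le:
  fixes y q :: real
  assumes "0 < y" "y < 1" "q > 0"
  shows "y powr q * \<bar>ln (y\<^sup>2)\<bar> \<le> 2 / q"
proof -
  have "ln ((1 / y) powr q) \<le> (1 / y) powr q - 1"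
    by (rule ln_le_minus_one) (use assms in simp)
  then have "q * ln (1 / y) \<le> (1 / y) powr q"
    using assms by (simp add: ln_powr)
  then have "y powr q * (q * ln (1 / y)) \<le> y powr q * (1 / y) powr q"
    by (intro mult_left_mono) auto
  also have "y powr q * (1 / y) powr q = 1"
    using assms by (simp add: powr_divide powr_one_eq_one)
  finally have "y powr q * ln (1 / y) \<le> 1 / q"
    using assms by (simp add: field_simps)
  moreover have "ln (y\<^sup>2) = - 2 * ln (1 / y)" "0 < ln (1 / y)"
    using assms by (simp_all add: ln_realpow ln_div)
  ultimately show ?thesis
    using assms by (simp add: abs_mult)
qed

lemma abs_powr_mult_abs_ln_le:
  fixes y q M :: real
  assumes "\<bar>y\<bar> \<le> M" "1 \<le> M" "q > 0"
  shows "\<bar>y\<bar> powr q * \<bar>ln (y\<^sup>2)\<bar> \<le> 2 / q + M powr q * (2 * M)"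
proof -
  have nonneg: "0 \<le> M powr q * (2 * M)" "0 \<le> 2 / q"
    using assms by simp_all
  consider "y = 0" | "0 < \<bar>y\<bar>" "\<bar>y\<bar> < 1" | "1 \<le> \<bar>y\<bar>"
    by linarith
  then show ?thesis
  proof cases
    case 1
    then show ?thesis using nonneg by simp
  next
    case 2
    then have "\<bar>y\<bar> powr q * \<bar>ln (\<bar>y\<bar>\<^sup>2)\<bar> \<le> 2 / q"
      using assms by (intro powr_mult_abs_ln_le)
    then have "\<bar>y\<bar> powr q * \<bar>ln (y\<^sup>2)\<bar> \<le> 2 / q"
      by simp
    then show ?thesis
      using nonneg by linarith
  next
    case 3
    have "ln (y\<^sup>2) = 2 * ln \<bar>y\<bar>"
      using 3 ln_realpow[of "\<bar>y\<bar>" 2] by simp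
    moreover have "0 \<le> ln \<bar>y\<bar>"
      using 3 by simp
    moreover have "ln \<bar>y\<bar> \<le> M"
      using 3 assms ln_le_minus_one[of "\<bar>y\<bar>"] by linarith
    ultimately have "0 \<le> ln (y\<^sup>2)" "ln (y\<^sup>2) \<le> 2 * M"
      by simp_all
    moreover have "\<bar>y\<bar> powr q \<le> M powr q"
      using assms 3 by (intro powr_mono2) auto
    ultimately have "\<bar>y\<bar> powr q * \<bar>ln (y\<^sup>2)\<bar> \<le> M powr q * (2 * M)"
      by (intro mult_mono) auto
    then show ?thesis
      using nonneg by linarith
  qed
qed

text \<open>A square-summable sequence is bounded, so for \<open>p > 2\<close> the terms \<open>|f|\<^sup>p\<close> and
  \<open>|f|\<^sup>p log f\<^sup>2\<close> are dominated by a multiple of \<open>f\<^sup>2\<close>.\<close>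

lemma summable_on_abs_powr:
  fixes f :: "'a \<Rightarrow> real"
  assumes f_summable: "(\<lambda>x. (f x)\<^sup>2) summable_on UNIV" and "p > 2"
  shows "(\<lambda>x. \<bar>f x\<bar> powr p) summable_on UNIV"
    and "(\<lambda>x. \<bar>f x\<bar> powr p * ln ((f x)\<^sup>2)) summable_on UNIV"
proof -
  define M where "M = max 1 (sqrt (infsum (\<lambda>x. (f x)\<^sup>2) UNIV))"
  have "1 \<le> M"
    by (simp add: M_def)
  have f_le: "\<bar>f x\<bar> \<le> M" for x
  proof -
    have "(f x)\<^sup>2 \<le> infsum (\<lambda>x. (f x)\<^sup>2) UNIV"
      by (rule infsum_ge_element[OF _ f_summable]) auto
    then have "sqrt ((f x)\<^sup>2) \<le> sqrt (infsum (\<lambda>x. (f x)\<^sup>2) UNIV)"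
      by (rule real_sqrt_le_mono)
    then show ?thesis
      by (simp add: M_def)
  qed
  show "(\<lambda>x. \<bar>f x\<bar> powr p) summable_on UNIV"
  proof (rule summable_on_abs_le[OF summable_on_cmult_left[OF f_summable]])
    fix x
    have "\<bar>f x\<bar> powr (p - 2) \<le> M powr (p - 2)"
      using f_le \<open>p > 2\<close> by (intro powr_mono2) auto
    then show "\<bar>\<bar>f x\<bar> powr p\<bar> \<le> (f x)\<^sup>2 * M powr (p - 2)"
      using abs_powr_split[OF \<open>p > 2\<close>, of "f x"] by (simp add: mult_left_mono)
  qed
  show "(\<lambda>x. \<bar>f x\<bar> powr p * ln ((f x)\<^sup>2)) summable_on UNIV"
  proof (rule summable_on_abs_le[OF summable_on_cmult_left[OF f_summable]])
    fix x
    have "\<bar>f x\<bar> powr (p - 2) * \<bar>ln ((f x)\<^sup>2)\<bar> \<le> 2 / (p - 2) + M powr (p - 2) * (2 * M)"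
      using f_le \<open>1 \<le> M\<close> \<open>p > 2\<close> by (intro abs_powr_mult_abs_ln_le) auto
    then show "\<bar>\<bar>f x\<bar> powr p * ln ((f x)\<^sup>2)\<bar> \<le> (f x)\<^sup>2 * (2 / (p - 2) + M powr (p - 2) * (2 * M))"
      using abs_powr_split[OF \<open>p > 2\<close>, of "f x"] by (simp add: abs_mult mult_left_mono mult.assoc)
  qed
qed

section \<open>Reduction of the sign-changing Nehari constraints\<close>

lemma
  shows pos_part_nonneg: "0 \<le> pos_part u x"
    and neg_part_nonpos: "neg_part u x \<le> 0"
    and pos_part_mult_neg_part: "pos_part u x * neg_part u x = 0"
    and pos_part_diff_le: "\<bar>pos_part u x - pos_part u y\<bar> \<le> \<bar>u x - u y\<bar>"
    and neg_part_diff_le: "\<bar>neg_part u x - neg_part u y\<bar> \<le> \<bar>u x - u y\<bar>"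
    and pos_part_sq_le: "(pos_part u x)\<^sup>2 \<le> (u x)\<^sup>2"
    and neg_part_sq_le: "(neg_part u x)\<^sup>2 \<le> (u x)\<^sup>2"
  unfolding pos_part_def neg_part_def
  by (auto simp: max_def min_def abs_le_square_iff[symmetric])

lemma
  assumes "r > 0" "t > 0"
  shows pos_part_combination: "pos_part (\<lambda>x. r * pos_part u x + t * neg_part u x) = (\<lambda>x. r * pos_part u x + 0 * neg_part u x)"
    and neg_part_combination: "neg_part (\<lambda>x. r * pos_part u x + t * neg_part u x) = (\<lambda>x. 0 * pos_part u x + t * neg_part u x)"
  using assms unfolding pos_part_def neg_part_def
  by (auto simp: fun_eq_iff max_def min_def zero_le_mult_iff mult_le_0_iff)

definition weighted_sq_sum :: "('a \<Rightarrow> real) \<Rightarrow> ('a \<Rightarrow> real) \<Rightarrow> real" where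
  "weighted_sq_sum h f = (\<Sum>\<^sub>\<infinity>x. h x * (f x)\<^sup>2)"

definition power_sum :: "real \<Rightarrow> ('a \<Rightarrow> real) \<Rightarrow> real" where
  "power_sum p f = (\<Sum>\<^sub>\<infinity>x. \<bar>f x\<bar> powr p)"

definition power_log_sum :: "real \<Rightarrow> ('a \<Rightarrow> real) \<Rightarrow> real" where
  "power_log_sum p f = (\<Sum>\<^sub>\<infinity>x. \<bar>f x\<bar> powr p * ln ((f x)\<^sup>2))"

definition cross_energy :: "('d::finite lat \<Rightarrow> 'd lat \<Rightarrow> real) \<Rightarrow> ('d lat \<Rightarrow> real) \<Rightarrow> ('d lat \<Rightarrow> real) \<Rightarrow> real" where
  "cross_energy w f g = (\<Sum>\<^sub>\<infinity>x. grad_prod w f g x)"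

lemma grad_norm_sq_eq_cross_energy: "grad_norm_sq w f = cross_energy w f f"
  by (simp add: grad_norm_sq_def cross_energy_def)

lemma cross_energy_commute: "cross_energy w f g = cross_energy w g f"
  unfolding cross_energy_def grad_prod_def by (simp add: algebra_simps)

lemma grad_prod_bilinear:
  fixes w :: "'d::finite lat \<Rightarrow> 'd lat \<Rightarrow> real"
  assumes "(\<lambda>y. w x y * (P x - P y) * (P x - P y)) summable_on (UNIV - {x})"
    and "(\<lambda>y. w x y * (P x - P y) * (Q x - Q y)) summable_on (UNIV - {x})"
    and "(\<lambda>y. w x y * (Q x - Q y) * (P x - P y)) summable_on (UNIV - {x})"
    and "(\<lambda>y. w x y * (Q x - Q y) * (Q x - Q y)) summable_on (UNIV - {x})"
  shows "grad_prod w (\<lambda>z. a1 * P z + a2 * Q z) (\<lambda>z. b1 * P z + b2 * Q z) x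
    = a1 * b1 * grad_prod w P P x + a1 * b2 * grad_prod w P Q x
      + a2 * b1 * grad_prod w Q P x + a2 * b2 * grad_prod w Q Q x"
proof -
  define I where "I f g = infsum (\<lambda>y. w x y * (f x - f y) * (g x - g y)) (UNIV - {x})" for f g
  have "((\<lambda>y. a1 * b1 * (w x y * (P x - P y) * (P x - P y)) + a1 * b2 * (w x y * (P x - P y) * (Q x - Q y))
      + a2 * b1 * (w x y * (Q x - Q y) * (P x - P y)) + a2 * b2 * (w x y * (Q x - Q y) * (Q x - Q y)))
      has_sum (a1 * b1 * I P P + a1 * b2 * I P Q + a2 * b1 * I Q P + a2 * b2 * I Q Q)) (UNIV - {x})"
    unfolding I_def by (intro has_sum_add has_sum_cmult_right has_sum_infsum assms)
  then have "infsum (\<lambda>y. w x y * ((a1 * P x + a2 * Q x) - (a1 * P y + a2 * Q y))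
        * ((b1 * P x + b2 * Q x) - (b1 * P y + b2 * Q y))) (UNIV - {x})
      = a1 * b1 * I P P + a1 * b2 * I P Q + a2 * b1 * I Q P + a2 * b2 * I Q Q"
    by (intro infsumI) (simp add: algebra_simps)
  then show ?thesis
    unfolding grad_prod_def I_def by (simp add: algebra_simps)
qed

lemma Jderiv_combination:
  fixes w :: "'d::finite lat \<Rightarrow> 'd lat \<Rightarrow> real" and h P Q u :: "'d lat \<Rightarrow> real"
  assumes K: "bounded_kernel w W0" and u_summable: "(\<lambda>x. (u x)\<^sup>2) summable_on UNIV"
    and hu_summable: "(\<lambda>x. h x * (u x)\<^sup>2) summable_on UNIV" and h_nonneg: "\<And>x. 0 \<le> h x"
    and P_diff: "\<And>x y. \<bar>P x - P y\<bar> \<le> \<bar>u x - u y\<bar>" and Q_diff: "\<And>x y. \<bar>Q x - Q y\<bar> \<le> \<bar>u x - u y\<bar>"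
    and PQ: "\<And>x. P x * Q x = 0" and P_sq: "\<And>x. (P x)\<^sup>2 \<le> (u x)\<^sup>2" and Q_sq: "\<And>x. (Q x)\<^sup>2 \<le> (u x)\<^sup>2"
  defines "A \<equiv> grad_norm_sq w P" and "B \<equiv> grad_norm_sq w Q" and "G \<equiv> cross_energy w P Q"
  shows "Jderiv a b p w h (\<lambda>z. a1 * P z + a2 * Q z) (\<lambda>z. b1 * P z + b2 * Q z)
     = a * (a1 * b1 * A + (a1 * b2 + a2 * b1) * G + a2 * b2 * B)
       + (a1 * b1 * weighted_sq_sum h P + a2 * b2 * weighted_sq_sum h Q)
       + b * (a1\<^sup>2 * A + 2 * a1 * a2 * G + a2\<^sup>2 * B) * (a1 * b1 * A + (a1 * b2 + a2 * b1) * G + a2 * b2 * B)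
       - (\<Sum>\<^sub>\<infinity>x. nonlin p (a1 * P x + a2 * Q x) * (b1 * P x + b2 * Q x))"
proof -
  interpret bounded_kernel w W0 by fact
  note PP = increment_product_summable[OF u_summable P_diff P_diff]
    and PQ' = increment_product_summable[OF u_summable P_diff Q_diff]
    and QP = increment_product_summable[OF u_summable Q_diff P_diff]
    and QQ = increment_product_summable[OF u_summable Q_diff Q_diff]
  have G_sym: "cross_energy w Q P = G"
    unfolding G_def by (rule cross_energy_commute)
  have expand: "grad_prod w (\<lambda>z. c1 * P z + c2 * Q z) (\<lambda>z. d1 * P z + d2 * Q z)
      = (\<lambda>x. c1 * d1 * grad_prod w P P x + c1 * d2 * grad_prod w P Q x
        + c2 * d1 * grad_prod w Q P x + c2 * d2 * grad_prod w Q Q x)" for c1 c2 d1 d2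
    by (rule ext, rule grad_prod_bilinear) (rule PP(1) PQ'(1) QP(1) QQ(1))+
  have grad_sum: "((\<lambda>x. grad_prod w (\<lambda>z. c1 * P z + c2 * Q z) (\<lambda>z. d1 * P z + d2 * Q z) x)
     has_sum (c1 * d1 * A + (c1 * d2 + c2 * d1) * G + c2 * d2 * B)) UNIV" for c1 c2 d1 d2
  proof -
    have "((\<lambda>x. c1 * d1 * grad_prod w P P x + c1 * d2 * grad_prod w P Q x
        + c2 * d1 * grad_prod w Q P x + c2 * d2 * grad_prod w Q Q x)
        has_sum (c1 * d1 * A + c1 * d2 * G + c2 * d1 * cross_energy w Q P + c2 * d2 * B)) UNIV"
      unfolding A_def B_def G_def grad_norm_sq_eq_cross_energy cross_energy_def
      by (intro has_sum_add has_sum_cmult_right has_sum_infsum grad_prod_summable[OF K u_summable]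
          P_diff Q_diff)
    then show ?thesis
      unfolding expand G_sym by (simp add: algebra_simps)
  qed
  have "grad_norm_sq w (\<lambda>z. a1 * P z + a2 * Q z) = a1\<^sup>2 * A + 2 * a1 * a2 * G + a2\<^sup>2 * B"
    unfolding grad_norm_sq_def using infsumI[OF grad_sum[of a1 a2 a1 a2]]
    by (simp add: power2_eq_square algebra_simps)
  moreover have "(\<Sum>\<^sub>\<infinity>x. grad_prod w (\<lambda>z. a1 * P z + a2 * Q z) (\<lambda>z. b1 * P z + b2 * Q z) x)
      = a1 * b1 * A + (a1 * b2 + a2 * b1) * G + a2 * b2 * B"
    by (rule infsumI[OF grad_sum])
  moreover have "(\<Sum>\<^sub>\<infinity>x. a * grad_prod w (\<lambda>z. a1 * P z + a2 * Q z) (\<lambda>z. b1 * P z + b2 * Q z) x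
        + h x * (a1 * P x + a2 * Q x) * (b1 * P x + b2 * Q x))
      = a * (a1 * b1 * A + (a1 * b2 + a2 * b1) * G + a2 * b2 * B)
        + (a1 * b1 * weighted_sq_sum h P + a2 * b2 * weighted_sq_sum h Q)"
  proof (rule infsumI)
    have "h x * (a1 * P x + a2 * Q x) * (b1 * P x + b2 * Q x)
        = a1 * b1 * (h x * (P x)\<^sup>2) + a2 * b2 * (h x * (Q x)\<^sup>2)" for x
    proof -
      have "h x * (a1 * P x + a2 * Q x) * (b1 * P x + b2 * Q x)
          = a1 * b1 * (h x * (P x)\<^sup>2) + a2 * b2 * (h x * (Q x)\<^sup>2) + (a1 * b2 + a2 * b1) * (h x * (P x * Q x))"
        by (simp add: algebra_simps power2_eq_square)
      then show ?thesis
        using PQ[of x] by simp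
    qed
    moreover have "(\<lambda>x. h x * (P x)\<^sup>2) summable_on UNIV" "(\<lambda>x. h x * (Q x)\<^sup>2) summable_on UNIV"
      using P_sq Q_sq h_nonneg by (auto intro!: summable_on_abs_le[OF hu_summable] mult_left_mono)
    ultimately show "((\<lambda>x. a * grad_prod w (\<lambda>z. a1 * P z + a2 * Q z) (\<lambda>z. b1 * P z + b2 * Q z) x
        + h x * (a1 * P x + a2 * Q x) * (b1 * P x + b2 * Q x)) has_sum
        (a * (a1 * b1 * A + (a1 * b2 + a2 * b1) * G + a2 * b2 * B)
          + (a1 * b1 * weighted_sq_sum h P + a2 * b2 * weighted_sq_sum h Q))) UNIV"
      unfolding weighted_sq_sum_def
      by (simp only:) (intro has_sum_add has_sum_cmult_right has_sum_infsum grad_sum)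
  qed
  ultimately show ?thesis
    unfolding Jderiv_def by simp
qed

lemma nonlin_sum_disjoint:
  assumes PQ: "\<And>x. P x * Q x = 0" and "r > 0" and P_summable: "(\<lambda>x. (P x)\<^sup>2) summable_on UNIV" and "p > 2"
  shows "(\<Sum>\<^sub>\<infinity>x. nonlin p (r * P x + t * Q x) * (r * P x))
           = r powr p * (power_sum p P * ln (r\<^sup>2) + power_log_sum p P)"
proof -
  have "nonlin p (r * P x + t * Q x) * (r * P x)
      = r powr p * (\<bar>P x\<bar> powr p * ln (r\<^sup>2)) + r powr p * (\<bar>P x\<bar> powr p * ln ((P x)\<^sup>2))" for x
  proof (cases "P x = 0")
    case True
    then show ?thesis using \<open>p > 2\<close> by simp
  next
    case False
    then have "Q x = 0"
      using PQ[of x] by simp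
    then show ?thesis
      using nonlin_mult_scale[OF \<open>r > 0\<close>] by simp
  qed
  moreover have "((\<lambda>x. r powr p * (\<bar>P x\<bar> powr p * ln (r\<^sup>2)) + r powr p * (\<bar>P x\<bar> powr p * ln ((P x)\<^sup>2)))
      has_sum (r powr p * (power_sum p P * ln (r\<^sup>2)) + r powr p * power_log_sum p P)) UNIV"
    unfolding power_sum_def power_log_sum_def
    by (intro has_sum_add has_sum_cmult_right has_sum_cmult_left has_sum_infsum
        summable_on_abs_powr[OF P_summable \<open>p > 2\<close>])
  ultimately show ?thesis
    by (simp add: infsumI algebra_simps)
qed

lemma H_space_summable:
  assumes "u \<in> H_space w h" and h_ge: "\<And>x. h0 \<le> h x" and "0 < h0"
  shows "(\<lambda>x. h x * (u x)\<^sup>2) summable_on UNIV" and "(\<lambda>x. (u x)\<^sup>2) summable_on UNIV"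
proof -
  have h_nonneg: "0 \<le> h x" for x
    using h_ge[of x] \<open>0 < h0\<close> by linarith
  show hu: "(\<lambda>x. h x * (u x)\<^sup>2) summable_on UNIV"
    using assms(1) h_nonneg unfolding H_space_def
    by (intro summable_on_if_ennreal_infsum_finite) auto
  show "(\<lambda>x. (u x)\<^sup>2) summable_on UNIV"
  proof (rule summable_on_abs_le[OF summable_on_cmult_right[OF hu, of "1 / h0"]])
    fix x
    have "h0 * (u x)\<^sup>2 \<le> h x * (u x)\<^sup>2"
      using h_ge[of x] by (intro mult_right_mono) auto
    then show "\<bar>(u x)\<^sup>2\<bar> \<le> 1 / h0 * (h x * (u x)\<^sup>2)"
      using \<open>0 < h0\<close> by (simp add: field_simps)
  qed
qed

lemma combination_in_H_space:
  assumes "bounded_kernel w W0" and h_nonneg: "\<And>x. 0 \<le> h x"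
    and u_summable: "(\<lambda>x. (u x)\<^sup>2) summable_on UNIV" and hu_summable: "(\<lambda>x. h x * (u x)\<^sup>2) summable_on UNIV"
  shows "(\<lambda>x. r * pos_part u x + t * neg_part u x) \<in> H_space w h"
proof -
  define v where "v x = r * pos_part u x + t * neg_part u x" for x
  have v_sq: "(v x)\<^sup>2 \<le> (r\<^sup>2 + t\<^sup>2) * (u x)\<^sup>2" for x
  proof -
    have "(v x)\<^sup>2 = r\<^sup>2 * (pos_part u x)\<^sup>2 + t\<^sup>2 * (neg_part u x)\<^sup>2"
      using pos_part_mult_neg_part[of u x] by (simp add: v_def power2_eq_square algebra_simps)
    also have "\<dots> \<le> r\<^sup>2 * (u x)\<^sup>2 + t\<^sup>2 * (u x)\<^sup>2"
      by (intro add_mono mult_left_mono pos_part_sq_le neg_part_sq_le) auto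
    finally show ?thesis
      by (simp add: algebra_simps)
  qed
  have "(\<lambda>x. (v x)\<^sup>2) summable_on UNIV"
    by (rule summable_on_abs_le[OF summable_on_cmult_right[OF u_summable, of "r\<^sup>2 + t\<^sup>2"]]) (simp add: v_sq)
  moreover have "(\<lambda>x. h x * (v x)\<^sup>2) summable_on UNIV"
  proof (rule summable_on_abs_le[OF summable_on_cmult_right[OF hu_summable, of "r\<^sup>2 + t\<^sup>2"]])
    fix x
    have "h x * (v x)\<^sup>2 \<le> h x * ((r\<^sup>2 + t\<^sup>2) * (u x)\<^sup>2)"
      using v_sq h_nonneg by (rule mult_left_mono)
    then show "\<bar>h x * (v x)\<^sup>2\<bar> \<le> (r\<^sup>2 + t\<^sup>2) * (h x * (u x)\<^sup>2)"
      using h_nonneg[of x] by (simp add: algebra_simps)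
  qed
  ultimately show ?thesis
    unfolding v_def[symmetric] H_space_def
    using W_space_if_square_summable[OF assms(1)] infsum_ennreal[of UNIV "\<lambda>x. h x * (v x)\<^sup>2"] h_nonneg
    by simp
qed

lemma grad_norm_sq_nonneg:
  assumes "\<And>x y. x \<noteq> y \<Longrightarrow> 0 \<le> w x y"
  shows "0 \<le> grad_norm_sq w f"
proof -
  have terms: "0 \<le> w x y * (f x - f y) * (f x - f y)" if "y \<noteq> x" for x y
    using assms[of x y] that by (simp add: mult.assoc)
  have "0 \<le> grad_prod w f f x" for x
    unfolding grad_prod_def by (rule mult_nonneg_nonneg, simp, rule infsum_nonneg) (use terms in auto)
  then show ?thesis
    unfolding grad_norm_sq_def by (simp add: infsum_nonneg)
qed

lemma cross_energy_pos_neg_nonneg: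
  assumes "\<And>x y. x \<noteq> y \<Longrightarrow> 0 \<le> w x y"
  shows "0 \<le> cross_energy w (pos_part u) (neg_part u)"
proof -
  \<comment> \<open>The increments of the two parts have the same sign, since the parts have disjoint supports.\<close>
  have "0 \<le> (pos_part u x - pos_part u y) * (neg_part u x - neg_part u y)" for x y
    unfolding pos_part_def neg_part_def by (simp add: max_def min_def mult_le_0_iff)
  then have terms: "0 \<le> w x y * (pos_part u x - pos_part u y) * (neg_part u x - neg_part u y)"
    if "y \<noteq> x" for x y
    using assms[of x y] that by (simp add: mult.assoc)
  have "0 \<le> grad_prod w (pos_part u) (neg_part u) x" for x
    unfolding grad_prod_def by (rule mult_nonneg_nonneg, simp, rule infsum_nonneg) (use terms in auto)
  then show ?thesis
    unfolding cross_energy_def by (simp add: infsum_nonneg)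
qed

lemma weighted_sq_sum_pos:
  assumes "(\<lambda>x. h x * (f x)\<^sup>2) summable_on UNIV" "\<And>x. 0 < h x" "f \<noteq> (\<lambda>_. 0)"
  shows "0 < weighted_sq_sum h f"
proof -
  obtain x0 where "f x0 \<noteq> 0"
    using assms(3) by auto
  then have "0 < h x0 * (f x0)\<^sup>2"
    using assms(2) by simp
  also have "\<dots> \<le> weighted_sq_sum h f"
    unfolding weighted_sq_sum_def
    using assms(1,2) by (intro infsum_ge_element) (auto simp: less_imp_le)
  finally show ?thesis .
qed

lemma power_sum_pos:
  assumes "(\<lambda>x. \<bar>f x\<bar> powr p) summable_on UNIV" "f \<noteq> (\<lambda>_. 0)"
  shows "0 < power_sum p f"
proof -
  obtain x0 where "f x0 \<noteq> 0"
    using assms(2) by auto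
  then have "0 < \<bar>f x0\<bar> powr p"
    by simp
  also have "\<dots> \<le> power_sum p f"
    unfolding power_sum_def using assms(1) by (intro infsum_ge_element) auto
  finally show ?thesis .
qed

definition nehari_fiber_system ::
    "real \<Rightarrow> real \<Rightarrow> real \<Rightarrow> ('d::finite lat \<Rightarrow> 'd lat \<Rightarrow> real) \<Rightarrow> ('d lat \<Rightarrow> real) \<Rightarrow> ('d lat \<Rightarrow> real)
      \<Rightarrow> real \<Rightarrow> real \<Rightarrow> bool" where
  "nehari_fiber_system a b p w h u r t \<longleftrightarrow>
     fiber_deriv p a b (grad_norm_sq w (pos_part u)) (grad_norm_sq w (neg_part u))
       (cross_energy w (pos_part u) (neg_part u)) (weighted_sq_sum h (pos_part u))
       (power_sum p (pos_part u)) (power_log_sum p (pos_part u)) r t = 0 \<and>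
     fiber_deriv p a b (grad_norm_sq w (neg_part u)) (grad_norm_sq w (pos_part u))
       (cross_energy w (pos_part u) (neg_part u)) (weighted_sq_sum h (neg_part u))
       (power_sum p (neg_part u)) (power_log_sum p (neg_part u)) t r = 0"

text \<open>On the fibre \<open>r u\<^sup>+ + t u\<^sup>-\<close> the two Nehari constraints become the scalar system
  \<open>fiber_deriv\<close>, because \<open>u\<^sup>+ u\<^sup>- = 0\<close> splits every nonlocal term into the two parts.\<close>

lemma sign_changing_fiber_iff:
  fixes w :: "'d::finite lat \<Rightarrow> 'd lat \<Rightarrow> real" and h u :: "'d lat \<Rightarrow> real"
  assumes K: "bounded_kernel w W0" and h_nonneg: "\<And>x. 0 \<le> h x"
    and u_summable: "(\<lambda>x. (u x)\<^sup>2) summable_on UNIV" and hu_summable: "(\<lambda>x. h x * (u x)\<^sup>2) summable_on UNIV"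
    and "p > 2" and "pos_part u \<noteq> (\<lambda>_. 0)" "neg_part u \<noteq> (\<lambda>_. 0)" and "r > 0" "t > 0"
  shows "(\<lambda>x. r * pos_part u x + t * neg_part u x) \<in> M_set a b p w h \<longleftrightarrow> nehari_fiber_system a b p w h u r t"
proof -
  define P Q where "P = pos_part u" and "Q = neg_part u"
  let ?v = "\<lambda>x. r * P x + t * Q x"
  note J = Jderiv_combination[OF K u_summable hu_summable h_nonneg pos_part_diff_le neg_part_diff_le
      pos_part_mult_neg_part pos_part_sq_le neg_part_sq_le, folded P_def Q_def]
  have PQ: "P x * Q x = 0" "Q x * P x = 0" for x
    unfolding P_def Q_def using pos_part_mult_neg_part[of u x] by (simp_all add: mult.commute)
  have P_summable: "(\<lambda>x. (P x)\<^sup>2) summable_on UNIV" and Q_summable: "(\<lambda>x. (Q x)\<^sup>2) summable_on UNIV"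
    unfolding P_def Q_def using pos_part_sq_le neg_part_sq_le by (auto intro!: summable_on_abs_le[OF u_summable])
  have pos_v: "pos_part ?v = (\<lambda>x. r * P x + 0 * Q x)" and neg_v: "neg_part ?v = (\<lambda>x. 0 * P x + t * Q x)"
    unfolding P_def Q_def using pos_part_combination neg_part_combination \<open>r > 0\<close> \<open>t > 0\<close> by blast+
  have "Jderiv a b p w h ?v (pos_part ?v) = fiber_deriv p a b (grad_norm_sq w P) (grad_norm_sq w Q)
      (cross_energy w P Q) (weighted_sq_sum h P) (power_sum p P) (power_log_sum p P) r t"
    using nonlin_sum_disjoint[OF PQ(1) \<open>r > 0\<close> P_summable \<open>p > 2\<close>, of t]
    unfolding pos_v J by (simp add: fiber_deriv_def power2_eq_square algebra_simps)
  moreover have "(\<Sum>\<^sub>\<infinity>x. nonlin p (r * P x + t * Q x) * (t * Q x))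
      = t powr p * (power_sum p Q * ln (t\<^sup>2) + power_log_sum p Q)"
    using nonlin_sum_disjoint[OF PQ(2) \<open>t > 0\<close> Q_summable \<open>p > 2\<close>, of r] by (simp add: add.commute)
  then have "Jderiv a b p w h ?v (neg_part ?v) = fiber_deriv p a b (grad_norm_sq w Q) (grad_norm_sq w P)
      (cross_energy w P Q) (weighted_sq_sum h Q) (power_sum p Q) (power_log_sum p Q) t r"
    unfolding neg_v J by (simp add: fiber_deriv_def power2_eq_square algebra_simps)
  moreover have "?v \<in> H_space w h"
    unfolding P_def Q_def by (rule combination_in_H_space[OF K h_nonneg u_summable hu_summable])
  moreover have "pos_part ?v \<noteq> (\<lambda>_. 0)" "neg_part ?v \<noteq> (\<lambda>_. 0)"
    using assms(6-9) unfolding pos_v neg_v by (auto simp: fun_eq_iff P_def Q_def)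
  ultimately have "?v \<in> M_set a b p w h \<longleftrightarrow>
      fiber_deriv p a b (grad_norm_sq w P) (grad_norm_sq w Q) (cross_energy w P Q) (weighted_sq_sum h P)
        (power_sum p P) (power_log_sum p P) r t = 0 \<and>
      fiber_deriv p a b (grad_norm_sq w Q) (grad_norm_sq w P) (cross_energy w P Q) (weighted_sq_sum h Q)
        (power_sum p Q) (power_log_sum p Q) t r = 0"
    unfolding M_set_def by auto
  then show ?thesis
    unfolding nehari_fiber_system_def P_def Q_def .
qed

lemma nehari_fiber_system_ex1:
  fixes w :: "'d::finite lat \<Rightarrow> 'd lat \<Rightarrow> real" and h u :: "'d lat \<Rightarrow> real"
  assumes K: "bounded_kernel w W0" and h_pos: "\<And>x. 0 < h x"
    and u_summable: "(\<lambda>x. (u x)\<^sup>2) summable_on UNIV" and hu_summable: "(\<lambda>x. h x * (u x)\<^sup>2) summable_on UNIV"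
    and "0 < a" "0 < b" "p \<ge> 5" and "pos_part u \<noteq> (\<lambda>_. 0)" "neg_part u \<noteq> (\<lambda>_. 0)"
  shows "\<exists>!(r, t). 0 < r \<and> 0 < t \<and> nehari_fiber_system a b p w h u r t"
proof -
  have "p > 2"
    using \<open>p \<ge> 5\<close> by simp
  have part_summable: "(\<lambda>x. (f x)\<^sup>2) summable_on UNIV" "(\<lambda>x. h x * (f x)\<^sup>2) summable_on UNIV"
    if f_le: "\<And>x. (f x)\<^sup>2 \<le> (u x)\<^sup>2" for f
  proof -
    show "(\<lambda>x. (f x)\<^sup>2) summable_on UNIV"
      by (rule summable_on_abs_le[OF u_summable]) (simp add: f_le)
    show "(\<lambda>x. h x * (f x)\<^sup>2) summable_on UNIV"
      by (rule summable_on_abs_le[OF hu_summable])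
         (use h_pos f_le in \<open>simp add: abs_mult less_imp_le mult_left_mono\<close>)
  qed
  have P_summable: "(\<lambda>x. (pos_part u x)\<^sup>2) summable_on UNIV" "(\<lambda>x. h x * (pos_part u x)\<^sup>2) summable_on UNIV"
    and Q_summable: "(\<lambda>x. (neg_part u x)\<^sup>2) summable_on UNIV" "(\<lambda>x. h x * (neg_part u x)\<^sup>2) summable_on UNIV"
    using part_summable[of "pos_part u", OF pos_part_sq_le] part_summable[of "neg_part u", OF neg_part_sq_le]
    by auto
  note w_nonneg = bounded_kernel.kernel_nonneg[OF K]
  have energies: "0 \<le> grad_norm_sq w (pos_part u)" "0 \<le> grad_norm_sq w (neg_part u)"
      "0 \<le> cross_energy w (pos_part u) (neg_part u)"
    using grad_norm_sq_nonneg[of w, OF w_nonneg] cross_energy_pos_neg_nonneg[of w, OF w_nonneg] by auto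
  have masses: "0 < weighted_sq_sum h (pos_part u)" "0 < weighted_sq_sum h (neg_part u)"
      "0 < power_sum p (pos_part u)" "0 < power_sum p (neg_part u)"
    using weighted_sq_sum_pos[OF P_summable(2) h_pos assms(8)] weighted_sq_sum_pos[OF Q_summable(2) h_pos assms(9)]
      power_sum_pos[OF summable_on_abs_powr(1)[OF P_summable(1) \<open>p > 2\<close>] assms(8)]
      power_sum_pos[OF summable_on_abs_powr(1)[OF Q_summable(1) \<open>p > 2\<close>] assms(9)]
    by blast+
  show ?thesis
    unfolding nehari_fiber_system_def
    by (rule fiber_system_ex1[OF energies \<open>0 < a\<close> \<open>0 < b\<close> masses \<open>p \<ge> 5\<close>])
qed

theorem mainTheorem14:
  fixes s a b p :: real
    and w :: "'d::finite lat \<Rightarrow> 'd lat \<Rightarrow> real"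
    and h u :: "'d lat \<Rightarrow> real"
  assumes "0 < s" "s < 1"
    and "admissible_weight s w"
    and "0 < a" "0 < b" "p > 6"
    and h1: "\<exists>h0>0. \<forall>x. h x \<ge> h0"
    and "u \<in> H_space w h"
    and "pos_part u \<noteq> (\<lambda>_. 0)" "neg_part u \<noteq> (\<lambda>_. 0)"
  shows "\<exists>!(r, t). 0 < r \<and> 0 < t \<and>
           (\<lambda>x. r * pos_part u x + t * neg_part u x) \<in> M_set a b p w h"
proof -
  obtain W0 where K: "bounded_kernel w W0"
    using admissible_weight_bounded_kernel assms(1,3) by blast
  obtain h0 where "h0 > 0" and h_ge: "\<And>x. h0 \<le> h x"
    using h1 by blast
  then have h_pos: "\<And>x. 0 < h x"
    using less_le_trans by blast
  note hu_summable = H_space_summable(1)[OF assms(8) h_ge \<open>h0 > 0\<close>]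
    and u_summable = H_space_summable(2)[OF assms(8) h_ge \<open>h0 > 0\<close>]
  have "0 < r \<and> 0 < t \<and> (\<lambda>x. r * pos_part u x + t * neg_part u x) \<in> M_set a b p w h \<longleftrightarrow>
      0 < r \<and> 0 < t \<and> nehari_fiber_system a b p w h u r t" for r t
    using sign_changing_fiber_iff[OF K less_imp_le[OF h_pos] u_summable hu_summable _ assms(9,10), of p r t]
      assms(6) by force
  moreover have "\<exists>!(r, t). 0 < r \<and> 0 < t \<and> nehari_fiber_system a b p w h u r t"
    using assms(4-6,9,10) by (intro nehari_fiber_system_ex1[OF K h_pos u_summable hu_summable]) auto
  ultimately show ?thesis
    by simp
qed

end
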